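(* For any $s\ge 0$ and $k\in\mathbb{N}$, $$\mathbb{E}\,\big|V_G^s(k)\setminus V_{\mathfrak{C}}^s(k)\big|\le \frac{4sk^2}{n-1}.$$
   Context: Complete graph $K_n$, $V_n=\{1,\dots,n\}$, $n>2$, edges $E_n$ = unordered pairs of distinct vertices. Fix $\nu\in[0,1)$. Links $(e_i,m_i)$, $i\ge1$, are i.i.d. with $e_i$ uniform on $E_n$ and independent mark $m_i\in\{\text{cross},\text{bar}\}$, cross with probability $\nu$; $\vec\omega_s$ is the sequence of the first $s$ links. Cycles of $\vec\omega_s$ are the cycles of the configuration $\{(e_i,\tfrac{i}{s+1},m_i):i\le s\}$ on $E_n\times S^1$ ($S^1=[0,1)$ periodic), defined by: loops move along $\{v\}\times S^1$, jump across a link to the other endpoint upon meeting it, keeping direction at a cross and reversing it at a bar; a cycle is the list of vertices $v$ with $(v,0)$ on a given loop, in order of visit, with the direction of passage. The cycles partition $V_n$. $G^s$ is the graph on $V_n$ with an edge $\{i,j\}$ iff $e_r=\{i,j\}$ for some $r\le s$. $V_G^s(k)$ is the set of vertices in connected components of $G^s$ with at least $k$ vertices; $V_{\mathfrak{C}}^s(k)$ is the set of vertices belonging to cycles of $\vec\omega_s$ of length at least $k$. *)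

theory Defs
  imports "HOL-Probability.Probability"
begin

text \<open>Vertices of K_n are 1..n; an edge is a 2-element subset.
  A link is a pair (edge, mark) where the mark True means cross and False means bar.\<close>

type_synonym link = "nat set \<times> bool"

definition edges :: "nat \<Rightarrow> nat set set" where
  "edges n = {{i, j} | i j. i \<in> {1..n} \<and> j \<in> {1..n} \<and> i \<noteq> j}"

definition link_pmf :: "nat \<Rightarrow> real \<Rightarrow> link pmf" where
  "link_pmf n \<nu> = pair_pmf (pmf_of_set (edges n)) (bernoulli_pmf \<nu>)"

text \<open>The sequence of the first s i.i.d. links; the i-th link (i = 1..s) is the list entry i-1.\<close>
definition links_pmf :: "nat \<Rightarrow> real \<Rightarrow> nat \<Rightarrow> link list pmf" where
  "links_pmf n \<nu> s = replicate_pmf s (link_pmf n \<nu>)"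

definition graph_rel :: "link list \<Rightarrow> (nat \<times> nat) set" where
  "graph_rel \<omega> = {(i, j). i \<noteq> j \<and> {i, j} \<in> fst ` set \<omega>}"

definition V_G :: "nat \<Rightarrow> link list \<Rightarrow> nat \<Rightarrow> nat set" where
  "V_G n \<omega> k = {v \<in> {1..n}. k \<le> card {w \<in> {1..n}. (v, w) \<in> (graph_rel \<omega>)\<^sup>*}}"

text \<open>Loops of the configuration {(e_i, i/(s+1), m_i)} on V_n x S^1.
  The circle of vertex v is cut at the times j/(s+1), j = 1..s; the segment (v,j), j = 0..s,
  is the open arc from j/(s+1) to (j+1)/(s+1) (with (s+1)/(s+1) = 0 in S^1).
  Segment ends are glued as follows:
  at time 0 (no link there) (v,s) is glued to (v,0);
  at time j/(s+1), with link e_j = {v,w}: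
    if v is not in e_j, (v,j-1) is glued to (v,j);
    cross: (v,j-1) is glued to (w,j) (the loop jumps and keeps its direction);
    bar: (v,j-1) is glued to (w,j-1) and (v,j) to (w,j) (the loop jumps and reverses).\<close>

definition seg_adj :: "nat \<Rightarrow> link list \<Rightarrow> ((nat \<times> nat) \<times> (nat \<times> nat)) set" where
  "seg_adj n \<omega> =
     {((v, length \<omega>), (v, 0)) | v. v \<in> {1..n}}
   \<union> {((v, j - 1), (v, j)) | v j. v \<in> {1..n} \<and> j \<in> {1..length \<omega>} \<and> v \<notin> fst (\<omega> ! (j - 1))}
   \<union> {((v, j - 1), (w, j)) | v w j. j \<in> {1..length \<omega>} \<and> snd (\<omega> ! (j - 1))
          \<and> v \<noteq> w \<and> fst (\<omega> ! (j - 1)) = {v, w}}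
   \<union> {((v, j - 1), (w, j - 1)) | v w j. j \<in> {1..length \<omega>} \<and> \<not> snd (\<omega> ! (j - 1))
          \<and> v \<noteq> w \<and> fst (\<omega> ! (j - 1)) = {v, w}}
   \<union> {((v, j), (w, j)) | v w j. j \<in> {1..length \<omega>} \<and> \<not> snd (\<omega> ! (j - 1))
          \<and> v \<noteq> w \<and> fst (\<omega> ! (j - 1)) = {v, w}}"

text \<open>v and w lie on the same cycle iff (v,0) and (w,0) lie on the same loop.\<close>
definition same_loop :: "nat \<Rightarrow> link list \<Rightarrow> nat \<Rightarrow> nat \<Rightarrow> bool" where
  "same_loop n \<omega> v w \<longleftrightarrow> ((v, 0), (w, 0)) \<in> (seg_adj n \<omega> \<union> (seg_adj n \<omega>)\<inverse>)\<^sup>*"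

definition cycle_of :: "nat \<Rightarrow> link list \<Rightarrow> nat \<Rightarrow> nat set" where
  "cycle_of n \<omega> v = {w \<in> {1..n}. same_loop n \<omega> v w}"

definition V_C :: "nat \<Rightarrow> link list \<Rightarrow> nat \<Rightarrow> nat set" where
  "V_C n \<omega> k = {v \<in> {1..n}. k \<le> card (cycle_of n \<omega> v)}"

end

theory Submission
  imports Defs
begin

text \<open>Cut every circle at time 0. The links glue the segments into strands, and recording
  which strand end is joined to which gives a fixed-point-free involution of the \<open>2 n\<close> strand
  ends; the loops are recovered by also joining the two ends at each vertex. A new link changes
  this pairing only at its two endpoints \<open>a\<close>, \<open>b\<close>: two loops merge, or one loop splits into
  two. Call a loop deficient if it has fewer than \<open>k\<close> vertices but is not a whole component of
  \<open>G\<close>. A merge never increases the number of deficient loops, and a split increases it by at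
  most two, and only if \<open>a\<close> and \<open>b\<close> are at loop distance less than \<open>k\<close> from each other in both
  directions. For a uniform edge this has probability at most \<open>2 k / (n - 1)\<close>, since every
  vertex has at most \<open>2 k\<close> such partners. Hence after \<open>s\<close> links there are at most
  \<open>4 s k / (n - 1)\<close> deficient loops on average, and each vertex of \<open>V_G(k) - V_C(k)\<close> lies on
  one of them, which has fewer than \<open>k\<close> vertices.\<close>

type_synonym strand_end = "nat \<times> bool"

text \<open>The strand end \<open>(v, True)\<close> is the segment \<open>(v, 0)\<close> just after time 0, and \<open>(v, False)\<close> is the last
  segment \<open>(v, s)\<close>. A pairing joins the two ends of each strand; \<open>wrap\<close> is the gluing at time 0.
  Ends at vertices outside \<open>{1..n}\<close> are paired by \<open>wrap\<close> so that pairings are total.\<close>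

definition wrap :: "strand_end \<Rightarrow> strand_end" where
  "wrap x = (fst x, \<not> snd x)"

definition pairing :: "nat \<Rightarrow> (strand_end \<Rightarrow> strand_end) \<Rightarrow> bool" where
  "pairing n mu \<longleftrightarrow> (\<forall>x. mu (mu x) = x) \<and> (\<forall>x. mu x \<noteq> x) \<and> (\<forall>x. fst x \<notin> {1..n} \<longrightarrow> mu x = wrap x)"

definition loop_step :: "(strand_end \<Rightarrow> strand_end) \<Rightarrow> (strand_end \<times> strand_end) set" where
  "loop_step mu = {(x, y). y = mu x \<or> y = wrap x}"

definition loop_succ :: "(strand_end \<Rightarrow> strand_end) \<Rightarrow> strand_end \<Rightarrow> strand_end" where
  "loop_succ mu y = mu (wrap y)"

definition loop_pred :: "(strand_end \<Rightarrow> strand_end) \<Rightarrow> strand_end \<Rightarrow> strand_end" where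
  "loop_pred mu y = wrap (mu y)"

definition loop_period :: "(strand_end \<Rightarrow> strand_end) \<Rightarrow> strand_end \<Rightarrow> nat" where
  "loop_period mu x = (LEAST L. 0 < L \<and> (loop_succ mu ^^ L) x = x)"

definition loop_of :: "(strand_end \<Rightarrow> strand_end) \<Rightarrow> nat \<Rightarrow> nat \<Rightarrow> nat set" where
  "loop_of mu n v = {w \<in> {1..n}. ((v, True), (w, True)) \<in> (loop_step mu)\<^sup>*}"

lemma wrap_wrap [simp]: "wrap (wrap x) = x"
  by (simp add: wrap_def)

lemma wrap_neq [simp]: "wrap x \<noteq> x"
  by (cases x) (simp add: wrap_def)

lemma fst_wrap [simp]: "fst (wrap x) = fst x"
  by (simp add: wrap_def)

lemma wrap_eq_iff: "wrap x = wrap y \<longleftrightarrow> x = y"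
  by (metis wrap_wrap)

lemma same_vertex_cases: "fst y = fst z \<Longrightarrow> z = y \<or> z = wrap y"
  by (cases y; cases z) (auto simp: wrap_def)

lemma pairingD:
  assumes "pairing n mu"
  shows "mu (mu x) = x" "mu x \<noteq> x" "fst x \<notin> {1..n} \<Longrightarrow> mu x = wrap x"
  using assms unfolding pairing_def by blast+

lemma pairing_eq_iff: "pairing n mu \<Longrightarrow> mu x = mu y \<longleftrightarrow> x = y"
  by (metis pairingD(1))

lemma pairing_wrap: "pairing n wrap"
  by (simp add: pairing_def)

lemma pairing_fst_in:
  assumes g: "pairing n mu" and x: "fst x \<in> {1..n}"
  shows "fst (mu x) \<in> {1..n}"
proof (rule ccontr)
  assume out: "fst (mu x) \<notin> {1..n}"
  then have "x = wrap (mu x)" using pairingD[OF g] by metis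
  then show False using x out by (metis fst_wrap)
qed

lemma funpow_diff_fixed:
  assumes "inj f" "i \<le> j" "(f ^^ i) x = (f ^^ j) x"
  shows "(f ^^ (j - i)) x = x"
proof -
  have "(f ^^ i) ((f ^^ (j - i)) x) = (f ^^ i) x"
    using assms(2,3) by (metis funpow_add o_apply le_add_diff_inverse)
  then show ?thesis by (rule injD[OF inj_fn[OF assms(1)]])
qed

lemma funpow_periodic:
  assumes "inj f" "finite (range (\<lambda>i. (f ^^ i) x))"
  obtains L where "0 < L" "(f ^^ L) x = x"
proof -
  have "\<not> inj (\<lambda>i::nat. (f ^^ i) x)" using assms(2) range_inj_infinite by blast
  then obtain i j where ij: "i < j" "(f ^^ i) x = (f ^^ j) x"
    unfolding inj_def by (metis linorder_neqE_nat)
  show ?thesis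
    using that[of "j - i"] funpow_diff_fixed[OF assms(1) less_imp_le[OF ij(1)] ij(2)] ij(1) by simp
qed

lemma inj_loop_succ: "pairing n mu \<Longrightarrow> inj (loop_succ mu)"
  unfolding inj_def loop_succ_def by (auto simp: pairing_eq_iff wrap_eq_iff)

lemma loop_succ_pow_Suc: "(loop_succ mu ^^ Suc i) x = mu (wrap ((loop_succ mu ^^ i) x))"
  by (simp add: loop_succ_def)

lemma pair_loop_succ_pow_Suc:
  "pairing n mu \<Longrightarrow> mu ((loop_succ mu ^^ Suc i) x) = wrap ((loop_succ mu ^^ i) x)"
  by (simp add: loop_succ_def pairingD)

lemma fst_loop_succ_pow_in:
  "pairing n mu \<Longrightarrow> fst x \<in> {1..n} \<Longrightarrow> fst ((loop_succ mu ^^ i) x) \<in> {1..n}"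
proof (induction i)
  case (Suc i)
  then have "fst (wrap ((loop_succ mu ^^ i) x)) \<in> {1..n}" by (simp only: fst_wrap)
  then show ?case using pairing_fst_in[OF Suc.prems(1)] by (simp only: loop_succ_pow_Suc)
qed simp

lemma loop_periodD:
  assumes g: "pairing n mu" and x: "fst x \<in> {1..n}"
  shows "0 < loop_period mu x" "(loop_succ mu ^^ loop_period mu x) x = x"
    "\<And>j. 0 < j \<Longrightarrow> j < loop_period mu x \<Longrightarrow> (loop_succ mu ^^ j) x \<noteq> x"
proof -
  have "range (\<lambda>i. (loop_succ mu ^^ i) x) \<subseteq> {1..n} \<times> UNIV"
    using fst_loop_succ_pow_in[OF g x] by (simp add: image_subset_iff mem_Times_iff)
  then have "finite (range (\<lambda>i. (loop_succ mu ^^ i) x))"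
    by (rule finite_subset) simp
  then obtain L where "0 < L" "(loop_succ mu ^^ L) x = x"
    using funpow_periodic[OF inj_loop_succ[OF g]] by blast
  then show "0 < loop_period mu x" "(loop_succ mu ^^ loop_period mu x) x = x"
    unfolding loop_period_def using LeastI[of "\<lambda>L. 0 < L \<and> (loop_succ mu ^^ L) x = x" L] by auto
  show "\<And>j. 0 < j \<Longrightarrow> j < loop_period mu x \<Longrightarrow> (loop_succ mu ^^ j) x \<noteq> x"
    unfolding loop_period_def using not_less_Least by blast
qed

lemma loop_succ_pow_mod:
  assumes g: "pairing n mu" and x: "fst x \<in> {1..n}"
  shows "(loop_succ mu ^^ i) x = (loop_succ mu ^^ (i mod loop_period mu x)) x"
proof -
  let ?L = "loop_period mu x"
  have "(loop_succ mu ^^ (m * ?L)) x = x" for m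
    by (induction m) (auto simp: funpow_add loop_periodD[OF g x] simp del: funpow.simps)
  moreover have "(loop_succ mu ^^ i) x
      = (loop_succ mu ^^ (i mod ?L)) ((loop_succ mu ^^ (i div ?L * ?L)) x)"
    by (metis funpow_add o_apply mod_div_mult_eq)
  ultimately show ?thesis by simp
qed

lemma loop_succ_pow_inj:
  assumes g: "pairing n mu" and x: "fst x \<in> {1..n}"
    and ij: "i < loop_period mu x" "j < loop_period mu x"
    and eq: "(loop_succ mu ^^ i) x = (loop_succ mu ^^ j) x"
  shows "i = j"
proof -
  have "(loop_succ mu ^^ (j - i)) x \<noteq> x" if "i < j" "j < loop_period mu x"
    "(loop_succ mu ^^ i) x = (loop_succ mu ^^ j) x" for i j
    using that loop_periodD(3)[OF g x, of "j - i"] by auto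
  moreover have "(loop_succ mu ^^ (j - i)) x = x" if "i \<le> j"
    "(loop_succ mu ^^ i) x = (loop_succ mu ^^ j) x" for i j
    using funpow_diff_fixed[OF inj_loop_succ[OF g] that] .
  ultimately show ?thesis using ij eq by (metis linorder_neqE_nat less_imp_le)
qed

lemma wrap_loop_succ_pow:
  "pairing n mu \<Longrightarrow> wrap ((loop_succ mu ^^ m) y) = (loop_pred mu ^^ m) (wrap y)"
  by (induction m) (auto simp: loop_succ_def loop_pred_def pairingD)

lemma loop_pred_pow_loop_succ_pow:
  "pairing n mu \<Longrightarrow> t \<le> j \<Longrightarrow> (loop_pred mu ^^ t) ((loop_succ mu ^^ j) y) = (loop_succ mu ^^ (j - t)) y"
proof (induction t arbitrary: j)
  case (Suc t)
  then obtain j' where j': "j = Suc j'" by (cases j) auto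
  have "loop_pred mu ((loop_succ mu ^^ j) y) = (loop_succ mu ^^ j') y"
    using j' Suc.prems by (simp add: loop_pred_def loop_succ_def pairingD)
  then show ?case using Suc j' by (simp add: funpow_Suc_right del: funpow.simps)
qed simp

text \<open>Loops are orientable: if the wrap of an orbit point lay on the same orbit, walking forward
  from one and backward from the other, the two walks would meet halfway, producing a fixed point
  of \<open>wrap\<close> (even distance) or of the pairing (odd distance).\<close>

lemma wrap_loop_succ_pow_neq:
  assumes g: "pairing n mu" and x: "fst x \<in> {1..n}"
  shows "wrap ((loop_succ mu ^^ i) x) \<noteq> (loop_succ mu ^^ j) x"
proof
  assume eq0: "wrap ((loop_succ mu ^^ i) x) = (loop_succ mu ^^ j) x"
  define j' where "j' = j + i * loop_period mu x"
  have "(loop_succ mu ^^ j') x = (loop_succ mu ^^ j) x"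
    using loop_succ_pow_mod[OF g x, of j'] loop_succ_pow_mod[OF g x, of j] by (simp add: j'_def)
  with eq0 have eq: "wrap ((loop_succ mu ^^ i) x) = (loop_succ mu ^^ j') x" by simp
  have "i * 1 \<le> i * loop_period mu x" using loop_periodD(1)[OF g x] by (intro mult_le_mono2) auto
  then have "i \<le> j'" unfolding j'_def by linarith
  have meet: "wrap ((loop_succ mu ^^ (i + t)) x) = (loop_succ mu ^^ (j' - t)) x" if "t \<le> j'" for t
  proof -
    have "wrap ((loop_succ mu ^^ (i + t)) x) = (loop_pred mu ^^ t) (wrap ((loop_succ mu ^^ i) x))"
      using wrap_loop_succ_pow[OF g] by (metis funpow_add o_apply add.commute)
    also have "\<dots> = (loop_succ mu ^^ (j' - t)) x"
      using eq loop_pred_pow_loop_succ_pow[OF g that] by simp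
    finally show ?thesis .
  qed
  show False
  proof (cases "even (j' - i)")
    case True
    then obtain t where "j' - i = 2 * t" by (rule evenE)
    then have "i + t = j' - t" "t \<le> j'" using \<open>i \<le> j'\<close> by auto
    then show False using meet[of t] wrap_neq by metis
  next
    case False
    then obtain t where "j' - i = 2 * t + 1" by (rule oddE)
    then have "j' - t = Suc (i + t)" "t \<le> j'" using \<open>i \<le> j'\<close> by auto
    then have "wrap ((loop_succ mu ^^ (i + t)) x) = mu (wrap ((loop_succ mu ^^ (i + t)) x))"
      using meet[of t] by (simp add: loop_succ_def)
    then show False using pairingD(2)[OF g] by metis
  qed
qed

lemma pair_eq_wrap_last:
  assumes g: "pairing n mu" and x: "fst x \<in> {1..n}"
  shows "mu x = wrap ((loop_succ mu ^^ (loop_period mu x - 1)) x)"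
proof -
  have "Suc (loop_period mu x - 1) = loop_period mu x" using loop_periodD(1)[OF g x] by simp
  then have "x = mu (wrap ((loop_succ mu ^^ (loop_period mu x - 1)) x))"
    using loop_periodD(2)[OF g x] loop_succ_pow_Suc[where i="loop_period mu x - 1" and x=x] by simp
  then show ?thesis using pairingD(1)[OF g] by metis
qed

lemma loop_step_iff: "(x, y) \<in> loop_step mu \<longleftrightarrow> y = mu x \<or> y = wrap x"
  by (auto simp: loop_step_def)

lemma loop_step_pair: "(y, mu y) \<in> loop_step mu"
  and loop_step_wrap: "(y, wrap y) \<in> loop_step mu"
  by (simp_all add: loop_step_iff)

lemma sym_loop_step: "pairing n mu \<Longrightarrow> sym (loop_step mu)"
  by (auto simp: sym_def loop_step_iff pairingD)

lemma loop_connected_sym: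
  "pairing n mu \<Longrightarrow> (x, y) \<in> (loop_step mu)\<^sup>* \<Longrightarrow> (y, x) \<in> (loop_step mu)\<^sup>*"
  by (rule symD[OF sym_rtrancl[OF sym_loop_step]])

lemma loop_connected_wrap: "(x, wrap x) \<in> (loop_step mu)\<^sup>*" "(wrap x, x) \<in> (loop_step mu)\<^sup>*"
  by (simp_all add: r_into_rtrancl loop_step_iff)

lemma loop_connected_pair: "(x, mu x) \<in> (loop_step mu)\<^sup>*"
  by (rule r_into_rtrancl) (simp add: loop_step_iff)

lemma loop_connected_start:
  "((fst y, True), y) \<in> (loop_step mu)\<^sup>*" "(y, (fst y, True)) \<in> (loop_step mu)\<^sup>*"
proof -
  have "y = (fst y, True) \<or> y = wrap (fst y, True)" by (cases y) (auto simp: wrap_def)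
  then show "((fst y, True), y) \<in> (loop_step mu)\<^sup>*" "(y, (fst y, True)) \<in> (loop_step mu)\<^sup>*"
    using loop_connected_wrap[of "(fst y, True)" mu] by auto
qed

lemma loop_connected_in_loop_of:
  "(y, z) \<in> (loop_step mu)\<^sup>* \<Longrightarrow> fst z \<in> {1..n} \<Longrightarrow> fst z \<in> loop_of mu n (fst y)"
  unfolding loop_of_def
  using rtrancl_trans[OF rtrancl_trans[OF loop_connected_start(1)] loop_connected_start(2)] by simp

lemma loop_connected_orbit: "(x, (loop_succ mu ^^ i) x) \<in> (loop_step mu)\<^sup>*"
proof (induction i)
  case (Suc i)
  then show ?case unfolding loop_succ_pow_Suc
    using rtrancl_into_rtrancl[OF rtrancl_into_rtrancl[OF _ loop_step_wrap] loop_step_pair] by blast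
qed simp

lemma loop_connected_imp_orbit:
  assumes g: "pairing n mu" and x: "fst x \<in> {1..n}" and xy: "(x, y) \<in> (loop_step mu)\<^sup>*"
  shows "\<exists>i < loop_period mu x. y = (loop_succ mu ^^ i) x \<or> y = wrap ((loop_succ mu ^^ i) x)"
  using xy
proof (induction rule: rtrancl_induct)
  case base
  then show ?case using loop_periodD(1)[OF g x] by (intro exI[of _ 0]) auto
next
  case (step y z)
  let ?L = "loop_period mu x"
  from step.IH obtain i where i: "i < ?L" "y = (loop_succ mu ^^ i) x \<or> y = wrap ((loop_succ mu ^^ i) x)"
    by blast
  consider "z = wrap y" | "z = mu y" using step.hyps(2) by (auto simp: loop_step_iff)
  then show ?case
  proof cases
    case 1
    then show ?thesis using i by auto
  next
    case 2
    show ?thesis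
    proof (cases "y = (loop_succ mu ^^ i) x")
      case True
      show ?thesis
      proof (cases i)
        case 0
        then have "z = wrap ((loop_succ mu ^^ (?L - 1)) x)" using 2 True pair_eq_wrap_last[OF g x] by simp
        then show ?thesis using loop_periodD(1)[OF g x] by (intro exI[of _ "?L - 1"]) simp
      next
        case (Suc i')
        then have "z = wrap ((loop_succ mu ^^ i') x)" using 2 True pair_loop_succ_pow_Suc[OF g] by simp
        then show ?thesis using i(1) Suc by (intro exI[of _ i']) simp
      qed
    next
      case False
      then have "y = wrap ((loop_succ mu ^^ i) x)" using i(2) by blast
      then have z: "z = (loop_succ mu ^^ Suc i) x" using 2 by (simp only: loop_succ_pow_Suc)
      show ?thesis
      proof (cases "Suc i < ?L")
        case True then show ?thesis using z by blast
      next
        case False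
        then have "z = x" using z i(1) loop_periodD(2)[OF g x] by (metis Suc_lessI)
        then show ?thesis using loop_periodD(1)[OF g x] by (intro exI[of _ 0]) simp
      qed
    qed
  qed
qed

lemma loop_connected_iff_orbit:
  assumes g: "pairing n mu" and x: "fst x \<in> {1..n}"
  shows "(x, y) \<in> (loop_step mu)\<^sup>*
    \<longleftrightarrow> (\<exists>i < loop_period mu x. y = (loop_succ mu ^^ i) x \<or> y = wrap ((loop_succ mu ^^ i) x))"
  using loop_connected_imp_orbit[OF g x] loop_connected_orbit
    rtrancl_into_rtrancl[OF loop_connected_orbit loop_step_wrap] by blast

lemma mem_loop_of_iff:
  assumes g: "pairing n mu" and v: "v \<in> {1..n}"
  shows "w \<in> loop_of mu n v
    \<longleftrightarrow> w \<in> {1..n} \<and> (\<exists>i < loop_period mu (v, False). fst ((loop_succ mu ^^ i) (v, False)) = w)"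
proof -
  have "((v, True), (w, True)) \<in> (loop_step mu)\<^sup>* \<longleftrightarrow> ((v, False), (w, True)) \<in> (loop_step mu)\<^sup>*"
    using loop_connected_wrap[of "(v, False)" mu] by (auto simp: wrap_def intro: rtrancl_trans)
  also have "\<dots> \<longleftrightarrow> (\<exists>i < loop_period mu (v, False). fst ((loop_succ mu ^^ i) (v, False)) = w)"
    using loop_connected_iff_orbit[OF g, of "(v, False)"] v
    by (auto simp: wrap_def prod_eq_iff)
  finally show ?thesis unfolding loop_of_def by blast
qed

lemma loop_of_self: "v \<in> {1..n} \<Longrightarrow> v \<in> loop_of mu n v"
  by (simp add: loop_of_def)

lemma loop_of_subset: "loop_of mu n v \<subseteq> {1..n}"
  by (auto simp: loop_of_def)

lemma finite_loop_of: "finite (loop_of mu n v)"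
  using loop_of_subset by (rule finite_subset) simp

lemma loop_of_eq:
  assumes g: "pairing n mu" and w: "w \<in> loop_of mu n v"
  shows "loop_of mu n w = loop_of mu n v"
proof -
  have "((v, True), (w, True)) \<in> (loop_step mu)\<^sup>*" "((w, True), (v, True)) \<in> (loop_step mu)\<^sup>*"
    using w loop_connected_sym[OF g] by (auto simp: loop_of_def)
  then show ?thesis unfolding loop_of_def by (blast intro: rtrancl_trans)
qed

text \<open>A new link \<open>{a, b}\<close> comes after all earlier links, so it acts on the last segments, i.e. on
  the strand ends \<open>(a, False)\<close> and \<open>(b, False)\<close>: a cross exchanges them, a bar joins them to
  each other and joins their former partners to each other.\<close>

definition add_link :: "nat \<Rightarrow> nat \<Rightarrow> bool \<Rightarrow> (strand_end \<Rightarrow> strand_end) \<Rightarrow> strand_end \<Rightarrow> strand_end" where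
  "add_link a b cross mu x =
     (if cross then Transposition.transpose (a, False) (b, False) (mu (Transposition.transpose (a, False) (b, False) x))
      else if x = (a, False) then (b, False) else if x = (b, False) then (a, False)
      else if x = mu (a, False) then mu (b, False) else if x = mu (b, False) then mu (a, False)
      else mu x)"

lemma add_link_cross:
  "add_link a b True mu x = Transposition.transpose (a, False) (b, False) (mu (Transposition.transpose (a, False) (b, False) x))"
  by (simp add: add_link_def)

lemma add_link_bar:
  "add_link a b False mu x =
     (if x = (a, False) then (b, False) else if x = (b, False) then (a, False)
      else if x = mu (a, False) then mu (b, False) else if x = mu (b, False) then mu (a, False)
      else mu x)"
  by (simp add: add_link_def)

lemma add_link_commute: "add_link a b m mu = add_link b a m mu"
  by (rule ext) (auto simp: add_link_def Transposition.transpose_def)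

lemma add_link_other:
  assumes "pairing n mu" "x \<noteq> (a, False)" "x \<noteq> (b, False)" "x \<noteq> mu (a, False)" "x \<noteq> mu (b, False)"
  shows "add_link a b m mu x = mu x"
  using assms by (auto simp: add_link_def Transposition.transpose_def) (metis pairingD(1))+

lemma pairing_add_link_cross:
  assumes g: "pairing n mu" and ab: "a \<in> {1..n}" "b \<in> {1..n}"
  shows "pairing n (add_link a b True mu)"
proof -
  let ?t = "Transposition.transpose (a, False) (b, False)"
  have fixed: "?t y = y" if "fst y \<notin> {1..n}" for y
    using that ab by (cases y) (auto simp: Transposition.transpose_def)
  have "add_link a b True mu (add_link a b True mu x) = x" for x
    by (simp add: add_link_cross pairingD(1)[OF g])
  moreover have "add_link a b True mu x \<noteq> x" for x
  proof
    assume "add_link a b True mu x = x"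
    then have "mu (?t x) = ?t x" unfolding add_link_cross by (metis Transposition.transpose_involutory)
    then show False using pairingD(2)[OF g] by blast
  qed
  moreover have "add_link a b True mu x = wrap x" if "fst x \<notin> {1..n}" for x
    using that fixed[of x] fixed[of "wrap x"] pairingD(3)[OF g] by (simp add: add_link_cross)
  ultimately show ?thesis by (simp add: pairing_def)
qed

lemma pairing_add_link_bar:
  assumes g: "pairing n mu" and ab: "a \<noteq> b" "a \<in> {1..n}" "b \<in> {1..n}"
  shows "pairing n (add_link a b False mu)"
proof -
  let ?A = "(a, False)" and ?B = "(b, False)" and ?m = "add_link a b False mu"
  note G = pairingD[OF g]
  have inj: "mu x = mu y \<longleftrightarrow> x = y" for x y using pairing_eq_iff[OF g] by blast
  have AB: "?A \<noteq> ?B" "mu ?A \<noteq> ?A" "mu ?B \<noteq> ?B" "mu ?A \<noteq> mu ?B" using ab G(2) inj by auto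
  have "?m (?m x) = x" for x
  proof -
    consider "x = ?A" | "x = ?B" | "x \<noteq> ?A" "x \<noteq> ?B" "x = mu ?A"
      | "x \<noteq> ?A" "x \<noteq> ?B" "x \<noteq> mu ?A" "x = mu ?B"
      | "x \<noteq> ?A" "x \<noteq> ?B" "x \<noteq> mu ?A" "x \<noteq> mu ?B" by blast
    then show ?thesis
    proof cases
      case 3
      then have "mu ?B \<noteq> ?A" using G(1) by metis
      then show ?thesis using 3 AB by (simp add: add_link_bar)
    next
      case 4
      then have "mu ?A \<noteq> ?B" using G(1) by metis
      then show ?thesis using 4 AB by (simp add: add_link_bar)
    next
      case 5
      then have "mu x \<noteq> ?A" "mu x \<noteq> ?B" "mu x \<noteq> mu ?A" "mu x \<noteq> mu ?B" using G(1) inj by metis+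
      then show ?thesis using 5 by (simp add: add_link_bar G(1))
    qed (use AB in \<open>simp_all add: add_link_bar\<close>)
  qed
  moreover have "?m x \<noteq> x" for x
    using AB G(2)[of x] by (simp add: add_link_bar)
  moreover have "?m x = wrap x" if "fst x \<notin> {1..n}" for x
  proof -
    have "x \<noteq> ?A" "x \<noteq> ?B" "x \<noteq> mu ?A" "x \<noteq> mu ?B"
      using that ab pairing_fst_in[OF g, of ?A] pairing_fst_in[OF g, of ?B] by auto
    then show ?thesis using G(3)[OF that] by (simp add: add_link_bar)
  qed
  ultimately show ?thesis by (simp add: pairing_def)
qed

lemma pairing_add_link:
  "pairing n mu \<Longrightarrow> a \<noteq> b \<Longrightarrow> a \<in> {1..n} \<Longrightarrow> b \<in> {1..n} \<Longrightarrow> pairing n (add_link a b m mu)"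
  by (cases m) (simp_all add: pairing_add_link_cross pairing_add_link_bar)

lemma loop_arc_persists:
  assumes agree: "\<And>q. i \<le> q \<Longrightarrow> q < j \<Longrightarrow> mu' (wrap ((loop_succ mu ^^ q) x)) = mu (wrap ((loop_succ mu ^^ q) x))"
    and "i \<le> j"
  shows "((loop_succ mu ^^ i) x, (loop_succ mu ^^ j) x) \<in> (loop_step mu')\<^sup>*"
  using \<open>i \<le> j\<close> agree
proof (induction j)
  case (Suc j)
  show ?case
  proof (cases "i = Suc j")
    case False
    then have "i \<le> j" using Suc.prems by simp
    then have arc: "((loop_succ mu ^^ i) x, (loop_succ mu ^^ j) x) \<in> (loop_step mu')\<^sup>*"
      using Suc.IH Suc.prems(2) by simp
    have "mu' (wrap ((loop_succ mu ^^ j) x)) = mu (wrap ((loop_succ mu ^^ j) x))"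
      using Suc.prems(2)[of j] \<open>i \<le> j\<close> by simp
    then have "mu' (wrap ((loop_succ mu ^^ j) x)) = (loop_succ mu ^^ Suc j) x"
      by (simp only: loop_succ_pow_Suc)
    then have "(wrap ((loop_succ mu ^^ j) x), (loop_succ mu ^^ Suc j) x) \<in> loop_step mu'"
      using loop_step_pair[of "wrap ((loop_succ mu ^^ j) x)" mu'] by simp
    then show ?thesis by (rule rtrancl_into_rtrancl[OF rtrancl_into_rtrancl[OF arc loop_step_wrap]])
  qed simp
qed simp

lemma loop_connected_add_link_away:
  assumes g: "pairing n mu"
    and away: "\<And>y. (x, y) \<in> (loop_step mu)\<^sup>* \<Longrightarrow> y \<noteq> (a, False) \<and> y \<noteq> (b, False)"
  shows "(x, z) \<in> (loop_step (add_link a b m mu))\<^sup>* \<longleftrightarrow> (x, z) \<in> (loop_step mu)\<^sup>*"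
proof -
  have agree: "add_link a b m mu y = mu y" if y: "(x, y) \<in> (loop_step mu)\<^sup>*" for y
  proof -
    have "(x, mu y) \<in> (loop_step mu)\<^sup>*" using rtrancl_into_rtrancl[OF y loop_step_pair] .
    then have "y \<noteq> mu (a, False)" "y \<noteq> mu (b, False)" using away pairingD(1)[OF g] by metis+
    then show ?thesis using add_link_other[OF g] away[OF y] by blast
  qed
  show ?thesis
  proof
    assume "(x, z) \<in> (loop_step (add_link a b m mu))\<^sup>*"
    then show "(x, z) \<in> (loop_step mu)\<^sup>*"
    proof (induction rule: rtrancl_induct)
      case (step y z)
      have "z = add_link a b m mu y \<or> z = wrap y" using step.hyps(2) by (simp add: loop_step_iff)
      then have "(y, z) \<in> loop_step mu" using agree[OF step.IH] by (auto simp: loop_step_iff)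
      then show ?case by (rule rtrancl_into_rtrancl[OF step.IH])
    qed simp
  next
    assume "(x, z) \<in> (loop_step mu)\<^sup>*"
    then show "(x, z) \<in> (loop_step (add_link a b m mu))\<^sup>*"
    proof (induction rule: rtrancl_induct)
      case (step y z)
      have "z = mu y \<or> z = wrap y" using step.hyps(2) by (simp add: loop_step_iff)
      then have "(y, z) \<in> loop_step (add_link a b m mu)" using agree[OF step.hyps(1)] by (auto simp: loop_step_iff)
      then show ?case by (rule rtrancl_into_rtrancl[OF step.IH])
    qed simp
  qed
qed

lemma loop_of_add_link_away:
  assumes g: "pairing n mu" and "a \<notin> loop_of mu n v" "b \<notin> loop_of mu n v" "a \<in> {1..n}" "b \<in> {1..n}"
  shows "loop_of (add_link a b m mu) n v = loop_of mu n v"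
proof -
  have "y \<noteq> (a, False) \<and> y \<noteq> (b, False)" if "((v, True), y) \<in> (loop_step mu)\<^sup>*" for y
    using loop_connected_in_loop_of[OF that, of n] assms(2-) by auto
  then show ?thesis unfolding loop_of_def using loop_connected_add_link_away[OF g] by simp
qed

lemma wrap_loop_succ_pow_neq_start:
  "pairing n mu \<Longrightarrow> fst x \<in> {1..n} \<Longrightarrow> wrap ((loop_succ mu ^^ q) x) \<noteq> x"
  using wrap_loop_succ_pow_neq[of n mu x q 0] by simp

lemma wrap_loop_succ_pow_neq_pair:
  assumes g: "pairing n mu" and x: "fst x \<in> {1..n}" and q: "q < loop_period mu x - 1"
  shows "wrap ((loop_succ mu ^^ q) x) \<noteq> mu x"
proof
  assume "wrap ((loop_succ mu ^^ q) x) = mu x"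
  then have "(loop_succ mu ^^ q) x = (loop_succ mu ^^ (loop_period mu x - 1)) x"
    using pair_eq_wrap_last[OF g x] by (simp add: wrap_eq_iff)
  then show False using loop_succ_pow_inj[OF g x, of q "loop_period mu x - 1"] q by simp
qed

lemma loop_arc_add_link_merge:
  assumes g: "pairing n mu" and ab: "a \<in> {1..n}" "b \<in> {1..n}" and b: "b \<notin> loop_of mu n a"
    and q: "q < loop_period mu (a, False)"
  shows "((a, False), (loop_succ mu ^^ q) (a, False)) \<in> (loop_step (add_link a b m mu))\<^sup>*"
proof -
  let ?A = "(a, False)" and ?B = "(b, False)"
  have A: "fst ?A \<in> {1..n}" using ab by simp
  have notB: "(?A, y) \<notin> (loop_step mu)\<^sup>*" if "fst y = b" for y
    using loop_connected_in_loop_of[of ?A y mu n] that ab b by auto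
  have "add_link a b m mu (wrap ((loop_succ mu ^^ q') ?A)) = mu (wrap ((loop_succ mu ^^ q') ?A))"
    if "q' < q" for q'
  proof (rule add_link_other[OF g])
    have "(?A, wrap ((loop_succ mu ^^ q') ?A)) \<in> (loop_step mu)\<^sup>*"
      using rtrancl_into_rtrancl[OF loop_connected_orbit loop_step_wrap] .
    moreover have "(?A, mu (wrap ((loop_succ mu ^^ q') ?A))) \<in> (loop_step mu)\<^sup>*"
      using loop_connected_orbit[where x="?A" and i="Suc q'" and mu=mu] by (simp add: loop_succ_def)
    ultimately show "wrap ((loop_succ mu ^^ q') ?A) \<noteq> ?B" "wrap ((loop_succ mu ^^ q') ?A) \<noteq> mu ?B"
      using notB pairingD(1)[OF g] by (metis fst_conv)+
    show "wrap ((loop_succ mu ^^ q') ?A) \<noteq> ?A" by (rule wrap_loop_succ_pow_neq_start[OF g A])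
    show "wrap ((loop_succ mu ^^ q') ?A) \<noteq> mu ?A"
      using wrap_loop_succ_pow_neq_pair[OF g A] that q by simp
  qed
  then show ?thesis using loop_arc_persists[of 0 q "add_link a b m mu" mu ?A] by simp
qed

lemma loop_of_add_link_merge:
  assumes g: "pairing n mu" and ab: "a \<noteq> b" "a \<in> {1..n}" "b \<in> {1..n}" and b: "b \<notin> loop_of mu n a"
  shows "loop_of mu n a \<union> loop_of mu n b \<subseteq> loop_of (add_link a b m mu) n a"
proof -
  let ?A = "(a, False)" and ?B = "(b, False)" and ?m = "add_link a b m mu"
  have g': "pairing n ?m" using pairing_add_link[OF g ab] .
  have B: "fst ?B \<in> {1..n}" using ab by simp
  have a: "a \<notin> loop_of mu n b" using b loop_of_eq[OF g] loop_of_self ab by metis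
  have arcA: "(?A, (loop_succ mu ^^ q) ?A) \<in> (loop_step ?m)\<^sup>*" if "q < loop_period mu ?A" for q
    using loop_arc_add_link_merge[OF g ab(2,3) b that] .
  have arcB: "(?B, (loop_succ mu ^^ q) ?B) \<in> (loop_step ?m)\<^sup>*" if "q < loop_period mu ?B" for q
    using loop_arc_add_link_merge[OF g ab(3,2) a that] by (simp add: add_link_commute)
  have AB: "(?A, ?B) \<in> (loop_step ?m)\<^sup>*"
  proof (cases m)
    case False
    then have "?m ?A = ?B" by (simp add: add_link_def)
    then show ?thesis by (metis loop_connected_pair)
  next
    case True
    have "mu ?B \<noteq> ?A" using a loop_connected_in_loop_of[OF loop_connected_pair[of ?B mu], of n] ab
      by auto
    then have "?m ?A = mu ?B" using True ab pairingD(2)[OF g] by (simp add: add_link_def Transposition.transpose_def)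
    moreover have "(?B, (loop_succ mu ^^ (loop_period mu ?B - 1)) ?B) \<in> (loop_step ?m)\<^sup>*"
      using arcB loop_periodD(1)[OF g B] by simp
    then have "(?B, wrap ((loop_succ mu ^^ (loop_period mu ?B - 1)) ?B)) \<in> (loop_step ?m)\<^sup>*"
      using loop_step_wrap by (rule rtrancl_into_rtrancl)
    ultimately have "(?B, ?m ?A) \<in> (loop_step ?m)\<^sup>*" using pair_eq_wrap_last[OF g B] by simp
    then show ?thesis
      using loop_connected_sym[OF g'] loop_connected_pair[of ?A ?m] by (metis rtrancl_trans)
  qed
  show ?thesis
  proof
    fix x assume "x \<in> loop_of mu n a \<union> loop_of mu n b"
    then consider q where "q < loop_period mu ?A" "fst ((loop_succ mu ^^ q) ?A) = x" "x \<in> {1..n}"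
      | q where "q < loop_period mu ?B" "fst ((loop_succ mu ^^ q) ?B) = x" "x \<in> {1..n}"
      using mem_loop_of_iff[OF g] ab by blast
    then show "x \<in> loop_of ?m n a"
      by cases (use loop_connected_in_loop_of arcA arcB AB rtrancl_trans in \<open>metis fst_conv\<close>)+
  qed
qed

definition loop_arc :: "(strand_end \<Rightarrow> strand_end) \<Rightarrow> strand_end \<Rightarrow> nat \<Rightarrow> nat \<Rightarrow> nat set" where
  "loop_arc mu x i j = (\<lambda>q. fst ((loop_succ mu ^^ q) x)) ` {i..<j}"

lemma card_loop_arc:
  assumes g: "pairing n mu" and x: "fst x \<in> {1..n}" and j: "j \<le> loop_period mu x"
  shows "card (loop_arc mu x i j) = j - i"
proof -
  have "inj_on (\<lambda>q. fst ((loop_succ mu ^^ q) x)) {i..<j}"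
  proof (rule inj_onI)
    fix p q assume pq: "p \<in> {i..<j}" "q \<in> {i..<j}" "fst ((loop_succ mu ^^ p) x) = fst ((loop_succ mu ^^ q) x)"
    then have "(loop_succ mu ^^ q) x = (loop_succ mu ^^ p) x"
      using same_vertex_cases wrap_loop_succ_pow_neq[OF g x] by metis
    moreover have "p < loop_period mu x" "q < loop_period mu x" using pq(1,2) j by auto
    ultimately show "p = q" using loop_succ_pow_inj[OF g x] by metis
  qed
  then show ?thesis by (simp add: loop_arc_def card_image)
qed

lemma loop_arc_subset_loop_of:
  assumes g: "pairing n mu" and x: "fst x \<in> {1..n}"
    and agree: "\<And>q. i \<le> q \<Longrightarrow> q < j - 1 \<Longrightarrow> mu' (wrap ((loop_succ mu ^^ q) x)) = mu (wrap ((loop_succ mu ^^ q) x))"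
  shows "loop_arc mu x i j \<subseteq> loop_of mu' n (fst ((loop_succ mu ^^ i) x))"
proof
  fix w assume "w \<in> loop_arc mu x i j"
  then obtain q where q: "i \<le> q" "q < j" "w = fst ((loop_succ mu ^^ q) x)" by (auto simp: loop_arc_def)
  then have "((loop_succ mu ^^ i) x, (loop_succ mu ^^ q) x) \<in> (loop_step mu')\<^sup>*"
    using agree by (intro loop_arc_persists) auto
  then show "w \<in> loop_of mu' n (fst ((loop_succ mu ^^ i) x))"
    using loop_connected_in_loop_of fst_loop_succ_pow_in[OF g x, of q] q(3) by blast
qed

text \<open>Let \<open>b\<close> be reached from \<open>(a, False)\<close> after \<open>p\<close> steps along the loop. The new link
  cuts the loop into the arcs \<open>[0, c)\<close> and \<open>[c, L)\<close>, where \<open>c\<close> is \<open>p\<close> or \<open>p + 1\<close>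
  depending on the direction in which the loop passes through \<open>b\<close>; away from the cut the new
  pairing agrees with the old one.\<close>

lemma add_link_agrees_off_cut:
  assumes g: "pairing n mu" and A: "a \<in> {1..n}"
    and p: "0 < p" "p < loop_period mu (a, False)" "fst ((loop_succ mu ^^ p) (a, False)) = b"
    and c: "c = (if (b, False) = (loop_succ mu ^^ p) (a, False) then p else Suc p)"
    and q: "q < loop_period mu (a, False) - 1" "q \<noteq> c - 1"
  shows "add_link a b m mu (wrap ((loop_succ mu ^^ q) (a, False))) = mu (wrap ((loop_succ mu ^^ q) (a, False)))"
proof -
  let ?A = "(a, False)" and ?B = "(b, False)" and ?L = "loop_period mu (a, False)"
  let ?y = "wrap ((loop_succ mu ^^ q) ?A)"
  have A': "fst ?A \<in> {1..n}" using A by simp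
  have inj: "i = j" if "(loop_succ mu ^^ i) ?A = (loop_succ mu ^^ j) ?A" "i < ?L" "j < ?L" for i j
    using loop_succ_pow_inj[OF g A'] that by blast
  show ?thesis
  proof (rule add_link_other[OF g])
    show "?y \<noteq> ?A" by (rule wrap_loop_succ_pow_neq_start[OF g A'])
    show "?y \<noteq> mu ?A" using wrap_loop_succ_pow_neq_pair[OF g A'] q by simp
    show "?y \<noteq> ?B" "?y \<noteq> mu ?B"
    proof -
      consider "?B = (loop_succ mu ^^ p) ?A" | "?B = wrap ((loop_succ mu ^^ p) ?A)"
        using same_vertex_cases[of "(loop_succ mu ^^ p) ?A" ?B] p(3) by auto
      then have "?y \<noteq> ?B \<and> ?y \<noteq> mu ?B"
      proof cases
        case 1
        have "mu ?B = wrap ((loop_succ mu ^^ (p - 1)) ?A)"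
          using 1 pair_loop_succ_pow_Suc[OF g, of "p - 1"] p(1) by simp
        moreover have "q \<noteq> p - 1" using q 1 c by simp
        moreover have "q = p - 1" if "(loop_succ mu ^^ q) ?A = (loop_succ mu ^^ (p - 1)) ?A"
          by (rule inj[OF that]) (use q(1) p(2) in auto)
        ultimately have "?y \<noteq> mu ?B" by (auto simp: wrap_eq_iff)
        moreover have "?y \<noteq> ?B" using 1 wrap_loop_succ_pow_neq[OF g A', of q p] by metis
        ultimately show ?thesis by blast
      next
        case 2
        then have "mu ?B = (loop_succ mu ^^ Suc p) ?A" by (simp only: loop_succ_pow_Suc)
        then have "?y \<noteq> mu ?B" using wrap_loop_succ_pow_neq[OF g A', of q "Suc p"] by metis
        moreover have "q \<noteq> p" using q 2 c by auto
        moreover have "q = p" if "(loop_succ mu ^^ q) ?A = (loop_succ mu ^^ p) ?A"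
          by (rule inj[OF that]) (use q(1) p(2) in auto)
        ultimately show ?thesis using 2 by (auto simp: wrap_eq_iff)
      qed
      then show "?y \<noteq> ?B" "?y \<noteq> mu ?B" by blast+
    qed
  qed
qed

lemma loop_of_add_link_split_arcs:
  assumes g: "pairing n mu" and ab: "a \<noteq> b" "a \<in> {1..n}" "b \<in> {1..n}"
    and p: "0 < p" "p < loop_period mu (a, False)" "fst ((loop_succ mu ^^ p) (a, False)) = b"
    and c: "c = (if (b, False) = (loop_succ mu ^^ p) (a, False) then p else Suc p)"
    and x: "x \<in> loop_of mu n a"
  shows "loop_of (add_link a b m mu) n x = loop_of (add_link a b m mu) n a
           \<and> loop_arc mu (a, False) 0 c \<subseteq> loop_of (add_link a b m mu) n x
         \<or> loop_of (add_link a b m mu) n x = loop_of (add_link a b m mu) n (fst ((loop_succ mu ^^ c) (a, False)))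
           \<and> loop_arc mu (a, False) c (loop_period mu (a, False)) \<subseteq> loop_of (add_link a b m mu) n x"
proof -
  let ?A = "(a, False)" and ?m = "add_link a b m mu" and ?L = "loop_period mu (a, False)"
  define a2 where "a2 = fst ((loop_succ mu ^^ c) ?A)"
  have g': "pairing n ?m" using pairing_add_link[OF g ab] .
  have A: "fst ?A \<in> {1..n}" using ab by simp
  have cL: "0 < c" "c \<le> ?L" using p c by auto
  have agree: "?m (wrap ((loop_succ mu ^^ q) ?A)) = mu (wrap ((loop_succ mu ^^ q) ?A))"
    if "q < ?L - 1" "q \<noteq> c - 1" for q
    using add_link_agrees_off_cut[OF g ab(2) p c that] .
  have "loop_arc mu ?A 0 c \<subseteq> loop_of ?m n (fst ((loop_succ mu ^^ 0) ?A))"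
    by (rule loop_arc_subset_loop_of[OF g A], rule agree) (use cL in arith)+
  then have arc1: "loop_arc mu ?A 0 c \<subseteq> loop_of ?m n a" by simp
  have arc2: "loop_arc mu ?A c ?L \<subseteq> loop_of ?m n a2"
    unfolding a2_def by (rule loop_arc_subset_loop_of[OF g A], rule agree) (use cL in arith)+
  obtain q where q: "q < ?L" "fst ((loop_succ mu ^^ q) ?A) = x"
    using mem_loop_of_iff[OF g ab(2)] x by blast
  show ?thesis
  proof (cases "q < c")
    case True
    then have "x \<in> loop_of ?m n a" using arc1 q(2) by (auto simp: loop_arc_def)
    then have "loop_of ?m n x = loop_of ?m n a" by (rule loop_of_eq[OF g'])
    then show ?thesis using arc1 by simp
  next
    case False
    then have "x \<in> loop_of ?m n a2" using arc2 q by (auto simp: loop_arc_def)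
    then have "loop_of ?m n x = loop_of ?m n a2" by (rule loop_of_eq[OF g'])
    then show ?thesis using arc2 by (simp add: a2_def)
  qed
qed

lemma loop_position:
  assumes g: "pairing n mu" and ab: "a \<noteq> b" "a \<in> {1..n}" and b: "b \<in> loop_of mu n a"
  obtains p where "0 < p" "p < loop_period mu (a, False)" "fst ((loop_succ mu ^^ p) (a, False)) = b"
proof -
  obtain p where "p < loop_period mu (a, False)" "fst ((loop_succ mu ^^ p) (a, False)) = b"
    using mem_loop_of_iff[OF g ab(2)] b by blast
  moreover have "p \<noteq> 0" using calculation(2) ab(1) by (intro notI) simp
  ultimately show ?thesis using that by blast
qed

lemma loop_of_add_link_split:
  assumes g: "pairing n mu" and ab: "a \<noteq> b" "a \<in> {1..n}" "b \<in> {1..n}" and b: "b \<in> loop_of mu n a"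
  obtains a2 where "\<And>x. x \<in> loop_of mu n a \<Longrightarrow>
    loop_of (add_link a b m mu) n x \<in> {loop_of (add_link a b m mu) n a, loop_of (add_link a b m mu) n a2}"
proof -
  obtain p where p: "0 < p" "p < loop_period mu (a, False)" "fst ((loop_succ mu ^^ p) (a, False)) = b"
    using loop_position[OF g ab(1,2) b] .
  show ?thesis
    using that loop_of_add_link_split_arcs[OF g ab p refl] by blast
qed

text \<open>\<open>b\<close> lies within \<open>k\<close> steps of \<open>(a, False)\<close> along its loop, in one of the two directions.\<close>

definition loop_near :: "(strand_end \<Rightarrow> strand_end) \<Rightarrow> nat \<Rightarrow> nat \<Rightarrow> nat \<Rightarrow> bool" where
  "loop_near mu k a b \<longleftrightarrow> (\<exists>i. 0 < i \<and> i < loop_period mu (a, False) \<and> fst ((loop_succ mu ^^ i) (a, False)) = b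
      \<and> (i < k \<or> loop_period mu (a, False) \<le> i + k))"

lemma card_loop_of_add_link_split:
  assumes g: "pairing n mu" and ab: "a \<noteq> b" "a \<in> {1..n}" "b \<in> {1..n}" and b: "b \<in> loop_of mu n a"
    and far: "\<not> loop_near mu k a b" and x: "x \<in> loop_of mu n a"
  shows "k \<le> card (loop_of (add_link a b m mu) n x)"
proof -
  let ?A = "(a, False)" and ?m = "add_link a b m mu" and ?L = "loop_period mu (a, False)"
  obtain p where p: "0 < p" "p < ?L" "fst ((loop_succ mu ^^ p) ?A) = b"
    using loop_position[OF g ab(1,2) b] .
  define c where "c = (if (b, False) = (loop_succ mu ^^ p) ?A then p else Suc p)"
  have A: "fst ?A \<in> {1..n}" using ab by simp
  have "k \<le> p" "p + k < ?L" using far p unfolding loop_near_def by auto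
  then have "k \<le> card (loop_arc mu ?A 0 c)" "k \<le> card (loop_arc mu ?A c ?L)"
    using card_loop_arc[OF g A, of c 0] card_loop_arc[OF g A, of ?L c] p(2) by (auto simp: c_def)
  then show ?thesis
    using loop_of_add_link_split_arcs[OF g ab p c_def x] card_mono[OF finite_loop_of]
    by (metis le_trans)
qed

definition component :: "(nat \<times> nat) set \<Rightarrow> nat \<Rightarrow> nat \<Rightarrow> nat set" where
  "component R n v = {w \<in> {1..n}. (v, w) \<in> R\<^sup>*}"

definition pairs_within :: "nat \<Rightarrow> (strand_end \<Rightarrow> strand_end) \<Rightarrow> (nat \<times> nat) set \<Rightarrow> bool" where
  "pairs_within n mu R \<longleftrightarrow> (\<forall>x. fst x \<in> {1..n} \<longrightarrow> (fst x, fst (mu x)) \<in> R\<^sup>*)"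

lemma component_eq:
  assumes "sym R" "w \<in> component R n v"
  shows "component R n w = component R n v"
proof -
  have "(v, w) \<in> R\<^sup>*" "(w, v) \<in> R\<^sup>*"
    using assms symD[OF sym_rtrancl[OF assms(1)]] by (auto simp: component_def)
  then show ?thesis unfolding component_def by (blast intro: rtrancl_trans)
qed

lemma component_add_edge_away:
  assumes "a \<notin> component R n v" "b \<notin> component R n v" "a \<in> {1..n}" "b \<in> {1..n}"
  shows "component (R \<union> {(a, b), (b, a)}) n v = component R n v"
proof -
  have "(v, w) \<in> R\<^sup>*" if "(v, w) \<in> (R \<union> {(a, b), (b, a)})\<^sup>*" for w
    using that
  proof (induction rule: rtrancl_induct)
    case (step y z)
    have "y \<noteq> a" "y \<noteq> b" using step.IH assms by (auto simp: component_def)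
    then have "(y, z) \<in> R" using step.hyps(2) by auto
    then show ?case by (rule rtrancl_into_rtrancl[OF step.IH])
  qed simp
  then show ?thesis
    unfolding component_def using in_rtrancl_UnI[of _ R "{(a, b), (b, a)}"] by blast
qed

lemma component_add_edge:
  assumes ab: "a \<in> {1..n}" "b \<in> {1..n}"
  shows "component (R \<union> {(a, b), (b, a)}) n a = component R n a \<union> component R n b"
proof -
  let ?R = "R \<union> {(a, b), (b, a)}"
  have "(a, w) \<in> R\<^sup>* \<or> (b, w) \<in> R\<^sup>*" if "(a, w) \<in> ?R\<^sup>*" for w
    using that
  proof (induction rule: rtrancl_induct)
    case (step y z)
    then show ?case by (auto intro: rtrancl_into_rtrancl)
  qed simp
  moreover have "(a, w) \<in> ?R\<^sup>*" if "(b, w) \<in> R\<^sup>*" for w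
  proof -
    have "(a, b) \<in> ?R\<^sup>*" by (rule r_into_rtrancl) simp
    moreover have "(b, w) \<in> ?R\<^sup>*" using that by (rule in_rtrancl_UnI[OF disjI1])
    ultimately show ?thesis by (rule rtrancl_trans)
  qed
  ultimately show ?thesis
    unfolding component_def using in_rtrancl_UnI[of _ R "{(a, b), (b, a)}"] by blast
qed

lemma loop_of_subset_component:
  assumes g: "pairing n mu" and within: "pairs_within n mu R" and v: "v \<in> {1..n}"
  shows "loop_of mu n v \<subseteq> component R n v"
proof
  fix w assume "w \<in> loop_of mu n v"
  then have w: "w \<in> {1..n}" "((v, True), (w, True)) \<in> (loop_step mu)\<^sup>*" by (auto simp: loop_of_def)
  have "fst y \<in> {1..n} \<and> (v, fst y) \<in> R\<^sup>*" if "((v, True), y) \<in> (loop_step mu)\<^sup>*" for y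
    using that
  proof (induction rule: rtrancl_induct)
    case (step y z)
    then have y: "fst y \<in> {1..n}" "(v, fst y) \<in> R\<^sup>*" by auto
    consider "z = mu y" | "z = wrap y" using step.hyps(2) by (auto simp: loop_step_iff)
    then show ?case
    proof cases
      case 1
      have "(fst y, fst (mu y)) \<in> R\<^sup>*" using within y(1) unfolding pairs_within_def by blast
      then show ?thesis using 1 y pairing_fst_in[OF g y(1)] by (auto intro: rtrancl_trans)
    qed (use y in simp)
  qed (use v in simp)
  then show "w \<in> component R n v" using w by (auto simp: component_def)
qed

lemma pairs_within_add_link:
  assumes g: "pairing n mu" and within: "pairs_within n mu R" and ab: "a \<in> {1..n}" "b \<in> {1..n}"
    and s: "sym R"
  shows "pairs_within n (add_link a b m mu) (R \<union> {(a, b), (b, a)})"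
  unfolding pairs_within_def
proof (intro allI impI)
  let ?R = "R \<union> {(a, b), (b, a)}" and ?A = "(a, False)" and ?B = "(b, False)"
  fix x :: strand_end assume x: "fst x \<in> {1..n}"
  have "sym {(a, b), (b, a)}" by (rule symI) blast
  then have sym: "(w, u) \<in> ?R\<^sup>*" if "(u, w) \<in> ?R\<^sup>*" for u w
    using that by (rule symD[OF sym_rtrancl[OF sym_Un[OF s]]])
  have old: "(fst y, fst (mu y)) \<in> ?R\<^sup>*" if "fst y \<in> {1..n}" for y
  proof -
    have "(fst y, fst (mu y)) \<in> R\<^sup>*" using within that unfolding pairs_within_def by blast
    then show ?thesis by (rule in_rtrancl_UnI[OF disjI1])
  qed
  have ab_conn: "(a, b) \<in> ?R\<^sup>*" by (rule r_into_rtrancl) simp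
  show "(fst x, fst (add_link a b m mu x)) \<in> ?R\<^sup>*"
  proof (cases m)
    case True
    let ?t = "Transposition.transpose ?A ?B"
    have t: "(fst y, fst (?t y)) \<in> ?R\<^sup>*" "fst (?t y) \<in> {1..n}" if "fst y \<in> {1..n}" for y
      using ab_conn sym[OF ab_conn] that ab by (auto simp: Transposition.transpose_def)
    have "(fst x, fst (?t x)) \<in> ?R\<^sup>*" "(fst (?t x), fst (mu (?t x))) \<in> ?R\<^sup>*"
      "(fst (mu (?t x)), fst (?t (mu (?t x)))) \<in> ?R\<^sup>*"
      using t(1)[OF x] old[OF t(2)[OF x]] t(1)[OF pairing_fst_in[OF g t(2)[OF x]]] .
    then have "(fst x, fst (?t (mu (?t x)))) \<in> ?R\<^sup>*" by (meson rtrancl_trans)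
    then show ?thesis using True by (simp add: add_link_cross)
  next
    case False
    define H where "H = {a, b, fst (mu ?A), fst (mu ?B)}"
    have from_a: "(a, u) \<in> ?R\<^sup>*" if "u \<in> H" for u
      using that old[of ?A] old[of ?B] ab rtrancl_trans[OF ab_conn] ab_conn by (auto simp: H_def)
    have conn: "(u, w) \<in> ?R\<^sup>*" if "u \<in> H" "w \<in> H" for u w
      using rtrancl_trans[OF sym[OF from_a[OF that(1)]] from_a[OF that(2)]] .
    show ?thesis
    proof (cases "x \<in> {?A, ?B, mu ?A, mu ?B}")
      case True
      then have "fst x \<in> H" "fst (add_link a b m mu x) \<in> H"
        using \<open>\<not> m\<close> by (auto simp: H_def add_link_bar)
      then show ?thesis by (rule conn)
    next
      case False
      then show ?thesis using old[OF x] \<open>\<not> m\<close> by (simp add: add_link_bar)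
    qed
  qed
qed

definition deficient_loops :: "(strand_end \<Rightarrow> strand_end) \<Rightarrow> (nat \<times> nat) set \<Rightarrow> nat \<Rightarrow> nat \<Rightarrow> nat set set" where
  "deficient_loops mu R n k =
     {loop_of mu n v | v. v \<in> {1..n} \<and> card (loop_of mu n v) < k \<and> loop_of mu n v \<noteq> component R n v}"

lemma finite_deficient_loops: "finite (deficient_loops mu R n k)"
  by (rule finite_subset[of _ "Pow {1..n}"]) (auto simp: deficient_loops_def loop_of_def)

lemma deficient_loops_add_link_subset:
  assumes g: "pairing n mu" and ab: "a \<in> {1..n}" "b \<in> {1..n}"
  shows "deficient_loops (add_link a b m mu) (R \<union> {(a, b), (b, a)}) n k
    \<subseteq> {X \<in> deficient_loops mu R n k. a \<notin> X \<and> b \<notin> X}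
      \<union> {X \<in> deficient_loops (add_link a b m mu) (R \<union> {(a, b), (b, a)}) n k.
           \<exists>v \<in> loop_of mu n a \<union> loop_of mu n b. X = loop_of (add_link a b m mu) n v}"
    (is "?new \<subseteq> ?untouched \<union> ?touched")
proof
  let ?m = "add_link a b m mu" and ?R = "R \<union> {(a, b), (b, a)}"
  fix X assume X: "X \<in> ?new"
  then obtain v where v: "v \<in> {1..n}" "X = loop_of ?m n v" "card (loop_of ?m n v) < k"
    "loop_of ?m n v \<noteq> component ?R n v"
    by (auto simp: deficient_loops_def)
  show "X \<in> ?untouched \<union> ?touched"
  proof (cases "v \<in> loop_of mu n a \<union> loop_of mu n b")
    case True
    then show ?thesis using X v(2) by blast
  next
    case False
    have away: "a \<notin> loop_of mu n v" "b \<notin> loop_of mu n v"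
      using False loop_of_eq[OF g] loop_of_self[OF v(1), of mu] by blast+
    then have same: "loop_of ?m n v = loop_of mu n v"
      using loop_of_add_link_away[OF g _ _ ab] by blast
    have "loop_of mu n v \<noteq> component R n v"
    proof
      assume "loop_of mu n v = component R n v"
      then have "component ?R n v = component R n v"
        using component_add_edge_away[of a R n v b] away ab by simp
      then show False using v(4) same \<open>loop_of mu n v = component R n v\<close> by simp
    qed
    then show ?thesis using v same away by (auto simp: deficient_loops_def)
  qed
qed

lemma card_loop_of_add_link_split_far:
  assumes g: "pairing n mu" and ab: "a \<noteq> b" "a \<in> {1..n}" "b \<in> {1..n}" and b: "b \<in> loop_of mu n a"
    and far: "\<not> (loop_near mu k a b \<and> loop_near mu k b a)" and x: "x \<in> loop_of mu n a"
  shows "k \<le> card (loop_of (add_link a b m mu) n x)"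
proof (cases "loop_near mu k a b")
  case False
  then show ?thesis using card_loop_of_add_link_split[OF g ab b _ x] by blast
next
  case True
  then have "\<not> loop_near mu k b a" using far by blast
  moreover have "loop_of mu n b = loop_of mu n a" using loop_of_eq[OF g b] .
  moreover have "a \<in> loop_of mu n b" using calculation(2) loop_of_self[OF ab(2)] by simp
  ultimately show ?thesis
    using card_loop_of_add_link_split[OF g ab(1)[symmetric] ab(3,2)] x by (simp add: add_link_commute)
qed

lemma loop_of_in_deficient_loops_iff:
  assumes g: "pairing n mu" and within: "pairs_within n mu R" and s: "sym R" and v: "v \<in> {1..n}"
  shows "loop_of mu n v \<in> deficient_loops mu R n k
    \<longleftrightarrow> card (loop_of mu n v) < k \<and> loop_of mu n v \<noteq> component R n v"
proof
  assume "loop_of mu n v \<in> deficient_loops mu R n k"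
  then obtain w where w: "w \<in> {1..n}" "loop_of mu n v = loop_of mu n w" "card (loop_of mu n w) < k"
    "loop_of mu n w \<noteq> component R n w"
    by (auto simp: deficient_loops_def)
  have "v \<in> component R n w"
    using loop_of_subset_component[OF g within w(1)] w(2) loop_of_self[OF v] by blast
  then show "card (loop_of mu n v) < k \<and> loop_of mu n v \<noteq> component R n v"
    using component_eq[OF s] w by simp
qed (use v in \<open>auto simp: deficient_loops_def\<close>)

text \<open>When two loops merge, the merged loop can be deficient only if one of the two old loops
  was: both are shorter, and if both were whole components then so is the merged loop.\<close>

lemma deficient_loops_add_link_merge:
  assumes g: "pairing n mu" and within: "pairs_within n mu R" and s: "sym R"
    and ab: "a \<noteq> b" "a \<in> {1..n}" "b \<in> {1..n}" and b: "b \<notin> loop_of mu n a"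
    and merged_deficient: "loop_of (add_link a b m mu) n a \<in> deficient_loops (add_link a b m mu) (R \<union> {(a, b), (b, a)}) n k"
  shows "loop_of mu n a \<in> deficient_loops mu R n k \<or> loop_of mu n b \<in> deficient_loops mu R n k"
proof -
  let ?m = "add_link a b m mu" and ?R = "R \<union> {(a, b), (b, a)}"
  have g': "pairing n ?m" using pairing_add_link[OF g ab] .
  have within': "pairs_within n ?m ?R" using pairs_within_add_link[OF g within ab(2,3) s] .
  have "sym {(a, b), (b, a)}" by (rule symI) blast
  then have short: "card (loop_of ?m n a) < k" and whole: "loop_of ?m n a \<noteq> component ?R n a"
    using loop_of_in_deficient_loops_iff[OF g' within' sym_Un[OF s] ab(2)] merged_deficient by auto
  have merged: "loop_of mu n a \<union> loop_of mu n b \<subseteq> loop_of ?m n a"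
    using loop_of_add_link_merge[OF g ab b] .
  have "card (loop_of mu n a) \<le> card (loop_of ?m n a)" "card (loop_of mu n b) \<le> card (loop_of ?m n a)"
    using merged by (intro card_mono[OF finite_loop_of]; blast)+
  then have "card (loop_of mu n a) < k" "card (loop_of mu n b) < k" using short by linarith+
  moreover have "loop_of mu n a \<noteq> component R n a \<or> loop_of mu n b \<noteq> component R n b"
  proof (rule ccontr)
    assume "\<not> ?thesis"
    then have "component ?R n a \<subseteq> loop_of ?m n a" using component_add_edge[OF ab(2,3)] merged by simp
    then show False using whole loop_of_subset_component[OF g' within' ab(2)] by blast
  qed
  ultimately show ?thesis using loop_of_in_deficient_loops_iff[OF g within s] ab(2,3) by blast
qed

lemma card_deficient_loops_add_link_merge:
  assumes g: "pairing n mu" and within: "pairs_within n mu R" and s: "sym R"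
    and ab: "a \<noteq> b" "a \<in> {1..n}" "b \<in> {1..n}" and b: "b \<notin> loop_of mu n a"
  shows "card (deficient_loops (add_link a b m mu) (R \<union> {(a, b), (b, a)}) n k) \<le> card (deficient_loops mu R n k)"
proof -
  let ?m = "add_link a b m mu" and ?R = "R \<union> {(a, b), (b, a)}"
  let ?old = "deficient_loops mu R n k" and ?new = "deficient_loops ?m ?R n k"
  define U where "U = {X \<in> ?old. a \<notin> X \<and> b \<notin> X}"
  define T where "T = {X \<in> ?new. \<exists>v \<in> loop_of mu n a \<union> loop_of mu n b. X = loop_of ?m n v}"
  have T: "T \<subseteq> {loop_of ?m n a}"
    using loop_of_add_link_merge[OF g ab b, of m] loop_of_eq[OF pairing_add_link[OF g ab, of m]]
    by (auto simp: T_def)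
  have "card ?new \<le> card (U \<union> T)"
    using deficient_loops_add_link_subset[OF g ab(2,3), of m R k] finite_deficient_loops
    unfolding U_def T_def by (intro card_mono) auto
  also have "\<dots> \<le> card U + card T" by (rule card_Un_le)
  also have "\<dots> \<le> card ?old"
  proof (cases "T = {}")
    case True
    then show ?thesis using card_mono[OF finite_deficient_loops, of U] by (auto simp: U_def)
  next
    case False
    then have "loop_of ?m n a \<in> ?new" using T by (auto simp: T_def)
    then have "\<exists>Y \<in> ?old. Y \<notin> U"
      using deficient_loops_add_link_merge[OF g within s ab b] ab loop_of_self[of a n mu] loop_of_self[of b n mu]
      by (auto simp: U_def)
    then have "card U < card ?old" by (intro psubset_card_mono finite_deficient_loops) (auto simp: U_def)
    moreover have "card T \<le> 1" using card_mono[OF _ T] by simp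
    ultimately show ?thesis by linarith
  qed
  finally show ?thesis .
qed

lemma card_deficient_loops_add_link_split:
  assumes g: "pairing n mu" and ab: "a \<noteq> b" "a \<in> {1..n}" "b \<in> {1..n}" and b: "b \<in> loop_of mu n a"
  shows "card (deficient_loops (add_link a b m mu) (R \<union> {(a, b), (b, a)}) n k)
           \<le> card (deficient_loops mu R n k) + (if loop_near mu k a b \<and> loop_near mu k b a then 2 else 0)"
proof -
  let ?m = "add_link a b m mu" and ?R = "R \<union> {(a, b), (b, a)}"
  let ?old = "deficient_loops mu R n k" and ?new = "deficient_loops ?m ?R n k"
  define U where "U = {X \<in> ?old. a \<notin> X \<and> b \<notin> X}"
  define T where "T = {X \<in> ?new. \<exists>v \<in> loop_of mu n a \<union> loop_of mu n b. X = loop_of ?m n v}"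
  have same: "loop_of mu n b = loop_of mu n a" using loop_of_eq[OF g b] .
  have "card ?new \<le> card (U \<union> T)"
    using deficient_loops_add_link_subset[OF g ab(2,3), of m R k] finite_deficient_loops
    unfolding U_def T_def by (intro card_mono) auto
  also have "\<dots> \<le> card U + card T" by (rule card_Un_le)
  also have "card U \<le> card ?old"
    using finite_deficient_loops by (intro card_mono) (auto simp: U_def)
  finally have new: "card ?new \<le> card ?old + card T" by simp
  obtain a2 where a2: "\<And>x. x \<in> loop_of mu n a \<Longrightarrow> loop_of ?m n x \<in> {loop_of ?m n a, loop_of ?m n a2}"
    using loop_of_add_link_split[OF g ab b] by blast
  have "T \<subseteq> {loop_of ?m n a, loop_of ?m n a2}" using a2 same by (auto simp: T_def)
  then have "card T \<le> card {loop_of ?m n a, loop_of ?m n a2}" by (rule card_mono[rotated]) simp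
  also have "\<dots> \<le> 2" by (simp add: card_insert_if)
  finally have "card T \<le> 2" .
  moreover have "T = {}" if "\<not> (loop_near mu k a b \<and> loop_near mu k b a)"
  proof (rule ccontr)
    assume "T \<noteq> {}"
    then obtain v w where "v \<in> loop_of mu n a" "loop_of ?m n v = loop_of ?m n w" "card (loop_of ?m n w) < k"
      using same by (auto simp: T_def deficient_loops_def)
    then show False using card_loop_of_add_link_split_far[OF g ab b that] by (metis not_le)
  qed
  ultimately show ?thesis using new by (cases "loop_near mu k a b \<and> loop_near mu k b a") auto
qed

lemma card_deficient_loops_add_link:
  assumes g: "pairing n mu" and within: "pairs_within n mu R" and s: "sym R"
    and ab: "a \<noteq> b" "a \<in> {1..n}" "b \<in> {1..n}"
  shows "card (deficient_loops (add_link a b m mu) (R \<union> {(a, b), (b, a)}) n k)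
           \<le> card (deficient_loops mu R n k) + (if loop_near mu k a b \<and> loop_near mu k b a then 2 else 0)"
proof (cases "b \<in> loop_of mu n a")
  case True
  then show ?thesis using card_deficient_loops_add_link_split[OF g ab] by blast
next
  case False
  then have "card (deficient_loops (add_link a b m mu) (R \<union> {(a, b), (b, a)}) n k) \<le> card (deficient_loops mu R n k)"
    by (rule card_deficient_loops_add_link_merge[OF g within s ab])
  then show ?thesis by linarith
qed

definition wrap_gluing :: "nat \<Rightarrow> link list \<Rightarrow> ((nat \<times> nat) \<times> (nat \<times> nat)) set" where
  "wrap_gluing n \<omega> = {((v, length \<omega>), (v, 0)) | v. v \<in> {1..n}}"

definition link_gluing :: "nat \<Rightarrow> nat \<Rightarrow> link \<Rightarrow> ((nat \<times> nat) \<times> (nat \<times> nat)) set" where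
  "link_gluing n j l =
     {((v, j - 1), (v, j)) | v. v \<in> {1..n} \<and> v \<notin> fst l}
   \<union> {((v, j - 1), (w, j)) | v w. snd l \<and> v \<noteq> w \<and> fst l = {v, w}}
   \<union> {((v, j - 1), (w, j - 1)) | v w. \<not> snd l \<and> v \<noteq> w \<and> fst l = {v, w}}
   \<union> {((v, j), (w, j)) | v w. \<not> snd l \<and> v \<noteq> w \<and> fst l = {v, w}}"

definition inner_gluing :: "nat \<Rightarrow> link list \<Rightarrow> ((nat \<times> nat) \<times> (nat \<times> nat)) set" where
  "inner_gluing n \<omega> = (\<Union>j \<in> {1..length \<omega>}. link_gluing n j (\<omega> ! (j - 1)))"

lemma seg_adj_eq: "seg_adj n \<omega> = wrap_gluing n \<omega> \<union> inner_gluing n \<omega>"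
  unfolding seg_adj_def wrap_gluing_def inner_gluing_def link_gluing_def by auto

lemma inner_gluing_snoc:
  "inner_gluing n (\<omega> @ [l]) = inner_gluing n \<omega> \<union> link_gluing n (Suc (length \<omega>)) l"
proof -
  have "{1..length (\<omega> @ [l])} = insert (Suc (length \<omega>)) {1..length \<omega>}" by auto
  moreover have "(\<omega> @ [l]) ! (j - 1) = \<omega> ! (j - 1)" if "j \<in> {1..length \<omega>}" for j
    using that by (auto simp: nth_append)
  ultimately show ?thesis unfolding inner_gluing_def by auto
qed

definition segment_of :: "nat \<Rightarrow> strand_end \<Rightarrow> nat \<times> nat" where
  "segment_of s x = (fst x, if snd x then 0 else s)"

definition strand_step :: "nat \<Rightarrow> link list \<Rightarrow> ((nat \<times> nat) \<times> (nat \<times> nat)) set" where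
  "strand_step n \<omega> = inner_gluing n \<omega> \<union> (inner_gluing n \<omega>)\<inverse>"

text \<open>\<open>mu\<close> joins exactly the two ends of each strand of the configuration cut at time 0.\<close>

definition strands_matched :: "nat \<Rightarrow> link list \<Rightarrow> (strand_end \<Rightarrow> strand_end) \<Rightarrow> bool" where
  "strands_matched n \<omega> mu \<longleftrightarrow> (\<forall>x y. fst x \<in> {1..n} \<longrightarrow> fst y \<in> {1..n} \<longrightarrow>
      ((segment_of (length \<omega>) x, segment_of (length \<omega>) y) \<in> (strand_step n \<omega>)\<^sup>* \<longleftrightarrow> y = x \<or> y = mu x))"

definition strand_ends :: "nat \<Rightarrow> link list \<Rightarrow> nat \<times> nat \<Rightarrow> strand_end set" where
  "strand_ends n \<omega> z = {x. fst x \<in> {1..n} \<and> (segment_of (length \<omega>) x, z) \<in> (strand_step n \<omega>)\<^sup>*}"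

lemma segment_of_simps [simp]: "segment_of s (v, True) = (v, 0)" "segment_of s (v, False) = (v, s)"
  by (simp_all add: segment_of_def)

lemma strand_connected_sym: "(z1, z2) \<in> (strand_step n \<omega>)\<^sup>* \<Longrightarrow> (z2, z1) \<in> (strand_step n \<omega>)\<^sup>*"
  unfolding strand_step_def by (rule symD[OF sym_rtrancl[OF sym_Un_converse]])

lemma strand_ends_eq:
  "(z1, z2) \<in> (strand_step n \<omega>)\<^sup>* \<Longrightarrow> strand_ends n \<omega> z1 = strand_ends n \<omega> z2"
  unfolding strand_ends_def using strand_connected_sym by (blast intro: rtrancl_trans)

lemma strand_ends_segment:
  assumes g: "pairing n mu" and matched: "strands_matched n \<omega> mu" and y: "fst y \<in> {1..n}"
  shows "strand_ends n \<omega> (segment_of (length \<omega>) y) = {y, mu y}"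
proof -
  have conn: "(segment_of (length \<omega>) x, segment_of (length \<omega>) y) \<in> (strand_step n \<omega>)\<^sup>* \<longleftrightarrow> x = y \<or> x = mu y"
    if "fst x \<in> {1..n}" for x
    using matched that y strand_connected_sym unfolding strands_matched_def by blast
  show ?thesis
  proof (rule set_eqI)
    fix x
    have "x \<in> {y, mu y} \<Longrightarrow> fst x \<in> {1..n}" using y pairing_fst_in[OF g y] by blast
    then show "x \<in> strand_ends n \<omega> (segment_of (length \<omega>) y) \<longleftrightarrow> x \<in> {y, mu y}"
      unfolding strand_ends_def using conn by blast
  qed
qed

lemma strands_matched_Nil: "strands_matched n [] wrap"
proof -
  have "(strand_step n [])\<^sup>* = Id" by (simp add: strand_step_def inner_gluing_def)
  moreover have "segment_of 0 x = segment_of 0 y \<longleftrightarrow> y = x \<or> y = wrap x" for x y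
    by (cases x; cases y) (auto simp: segment_of_def wrap_def)
  ultimately show ?thesis by (simp add: strands_matched_def)
qed

locale link_extension =
  fixes n :: nat and \<omega> :: "link list" and mu :: "strand_end \<Rightarrow> strand_end" and l :: link and a b :: nat
  assumes pairing: "pairing n mu" and matched: "strands_matched n \<omega> mu"
    and link: "a \<noteq> b" "a \<in> {1..n}" "b \<in> {1..n}" "fst l = {a, b}"
begin

abbreviation new_pairing :: "strand_end \<Rightarrow> strand_end" where
  "new_pairing \<equiv> add_link a b (snd l) mu"

text \<open>The ends of the new strand that continues the old strand at the end \<open>x\<close>; it is empty when
  a bar closes the old strand between \<open>(a, False)\<close> and \<open>(b, False)\<close> into a loop.\<close>

definition new_ends :: "strand_end \<Rightarrow> strand_end set" where
  "new_ends x =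
     (if x = (a, False) \<or> x = (b, False) then
        (if snd l then {Transposition.transpose (a, False) (b, False) x,
                        new_pairing (Transposition.transpose (a, False) (b, False) x)}
         else if mu (a, False) = (b, False) then {} else {mu (a, False), mu (b, False)})
      else {x, new_pairing x})"

text \<open>The ends of the new strand through a segment.\<close>

definition label :: "nat \<times> nat \<Rightarrow> strand_end set" where
  "label z = (if snd z = Suc (length \<omega>) then {(fst z, False), new_pairing (fst z, False)}
              else \<Union> (new_ends ` strand_ends n \<omega> z))"

lemma new_ends_other: "x \<noteq> (a, False) \<Longrightarrow> x \<noteq> (b, False) \<Longrightarrow> new_ends x = {x, new_pairing x}"
  by (simp add: new_ends_def)

lemma new_ends_pair: "new_ends (mu x) = new_ends x"
proof -
  let ?A = "(a, False)" and ?B = "(b, False)"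
  note G = pairingD[OF pairing]
  have AB: "?A \<noteq> ?B" using link(1) by simp
  have inj: "mu x = mu y \<longleftrightarrow> x = y" for x y using pairing_eq_iff[OF pairing] by blast
  have sw: "mu ?A = ?B \<longleftrightarrow> mu ?B = ?A" using G(1) by metis
  consider "x = ?A" | "x = ?B" | "x \<noteq> ?A" "x \<noteq> ?B" "mu x = ?A" | "x \<noteq> ?A" "x \<noteq> ?B" "mu x = ?B"
    | "x \<noteq> ?A" "x \<noteq> ?B" "mu x \<noteq> ?A" "mu x \<noteq> ?B" by blast
  then show ?thesis
  proof cases
    case 1
    then show ?thesis using AB G sw inj
      by (cases "snd l"; cases "mu ?A = ?B") (auto simp: new_ends_def add_link_def Transposition.transpose_def)
  next
    case 2
    then show ?thesis using AB G sw inj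
      by (cases "snd l"; cases "mu ?A = ?B") (auto simp: new_ends_def add_link_def Transposition.transpose_def)
  next
    case 3
    then have "x = mu ?A" using G(1) by metis
    then show ?thesis using 3 AB G sw inj
      by (cases "snd l") (auto simp: new_ends_def add_link_def Transposition.transpose_def)
  next
    case 4
    then have "x = mu ?B" using G(1) by metis
    then show ?thesis using 4 AB G sw inj
      by (cases "snd l") (auto simp: new_ends_def add_link_def Transposition.transpose_def)
  next
    case 5
    then have "x \<noteq> mu ?A" "x \<noteq> mu ?B" using G(1) by metis+
    then show ?thesis using 5 G inj
      by (cases "snd l") (auto simp: new_ends_def add_link_def Transposition.transpose_def)
  qed
qed

lemma label_old_segment:
  assumes "fst y \<in> {1..n}"
  shows "label (segment_of (length \<omega>) y) = new_ends y"
  using strand_ends_segment[OF pairing matched assms] new_ends_pair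
  by (simp add: label_def segment_of_def)

lemma label_end:
  assumes x: "fst x \<in> {1..n}"
  shows "label (segment_of (Suc (length \<omega>)) x) = {x, new_pairing x}"
proof (cases "snd x")
  case True
  then have "x \<noteq> (a, False)" "x \<noteq> (b, False)" by auto
  then show ?thesis
    using True label_old_segment[OF x] new_ends_other by (simp add: label_def segment_of_def)
next
  case False
  then have "x = (fst x, False)" by (cases x) simp
  then show ?thesis using False by (simp add: label_def segment_of_def)
qed

lemma label_link_gluing:
  assumes "(z1, z2) \<in> link_gluing n (Suc (length \<omega>)) l"
  shows "label z1 = label z2"
proof -
  let ?s = "length \<omega>"
  have ab: "v \<noteq> w \<Longrightarrow> fst l = {v, w} \<Longrightarrow> (v = a \<and> w = b) \<or> (v = b \<and> w = a)" for v w
    using link by (auto simp: doubleton_eq_iff)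
  have old: "label (v, ?s) = new_ends (v, False)" if "v \<in> {1..n}" for v
    using label_old_segment[of "(v, False)"] that by simp
  from assms show ?thesis unfolding link_gluing_def
  proof (elim UnE CollectE exE conjE)
    fix v assume z: "(z1, z2) = ((v, Suc ?s - 1), (v, Suc ?s))" and v: "v \<in> {1..n}" "v \<notin> fst l"
    then show ?thesis using old[OF v(1)] new_ends_other[of "(v, False)"] link(4)
      by (auto simp: label_def)
  next
    fix v w assume z: "(z1, z2) = ((v, Suc ?s - 1), (w, Suc ?s))" and c: "snd l" "v \<noteq> w" "fst l = {v, w}"
    then have "v \<in> {1..n}" "(v = a \<and> w = b) \<or> (v = b \<and> w = a)" using ab link by auto
    then show ?thesis using z c old link(1) by (auto simp: label_def new_ends_def)
  next
    fix v w assume z: "(z1, z2) = ((v, Suc ?s - 1), (w, Suc ?s - 1))" and c: "\<not> snd l" "v \<noteq> w" "fst l = {v, w}"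
    then have "v \<in> {1..n}" "w \<in> {1..n}" "(v = a \<and> w = b) \<or> (v = b \<and> w = a)" using ab link by auto
    then show ?thesis using z c old by (auto simp: new_ends_def)
  next
    fix v w assume z: "(z1, z2) = ((v, Suc ?s), (w, Suc ?s))" and c: "\<not> snd l" "v \<noteq> w" "fst l = {v, w}"
    then have "(v = a \<and> w = b) \<or> (v = b \<and> w = a)" using ab by auto
    moreover have "new_pairing (a, False) = (b, False)" "new_pairing (b, False) = (a, False)"
      using c link(1) by (auto simp: add_link_def)
    ultimately show ?thesis using z by (auto simp: label_def)
  qed
qed

lemma inner_gluing_segments: "(z1, z2) \<in> inner_gluing n \<omega> \<Longrightarrow> snd z1 \<le> length \<omega> \<and> snd z2 \<le> length \<omega>"
  by (auto simp: inner_gluing_def link_gluing_def)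

lemma label_connected:
  assumes "(z1, z2) \<in> (strand_step n (\<omega> @ [l]))\<^sup>*"
  shows "label z1 = label z2"
  using assms
proof (induction rule: rtrancl_induct)
  case (step y z)
  have "label y = label z"
  proof -
    consider "(y, z) \<in> strand_step n \<omega>" | "(y, z) \<in> link_gluing n (Suc (length \<omega>)) l"
      | "(z, y) \<in> link_gluing n (Suc (length \<omega>)) l"
      using step.hyps(2) by (auto simp: strand_step_def inner_gluing_snoc)
    then show ?thesis
    proof cases
      case 1
      then have "snd y \<le> length \<omega>" "snd z \<le> length \<omega>"
        using inner_gluing_segments[of y z] inner_gluing_segments[of z y] by (auto simp: strand_step_def)
      then show ?thesis using strand_ends_eq[OF r_into_rtrancl[OF 1]] by (simp add: label_def)
    qed (auto dest: label_link_gluing)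
  qed
  then show ?case using step.IH by simp
qed simp

abbreviation new_step :: "((nat \<times> nat) \<times> (nat \<times> nat)) set" where
  "new_step \<equiv> strand_step n (\<omega> @ [l])"

lemma old_connected: "(z1, z2) \<in> (strand_step n \<omega>)\<^sup>* \<Longrightarrow> (z1, z2) \<in> new_step\<^sup>*"
  using rtrancl_mono[of "strand_step n \<omega>" new_step] by (auto simp: strand_step_def inner_gluing_snoc)

lemma link_connected: "(z1, z2) \<in> link_gluing n (Suc (length \<omega>)) l \<Longrightarrow> (z1, z2) \<in> new_step\<^sup>*"
  by (rule r_into_rtrancl) (simp add: strand_step_def inner_gluing_snoc)

lemma new_connected_sym: "(z1, z2) \<in> new_step\<^sup>* \<Longrightarrow> (z2, z1) \<in> new_step\<^sup>*"
  by (rule strand_connected_sym)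

lemma old_strand_connected:
  "fst y \<in> {1..n} \<Longrightarrow> (segment_of (length \<omega>) y, segment_of (length \<omega>) (mu y)) \<in> new_step\<^sup>*"
  using matched pairing_fst_in[OF pairing] old_connected unfolding strands_matched_def by blast

lemma through_connected:
  assumes "fst y \<in> {1..n}" "y \<noteq> (a, False)" "y \<noteq> (b, False)"
  shows "(segment_of (length \<omega>) y, segment_of (Suc (length \<omega>)) y) \<in> new_step\<^sup>*"
proof (cases y)
  case (Pair v c)
  show ?thesis
  proof (cases c)
    case False
    then have "v \<in> {1..n}" "v \<notin> fst l" using assms Pair link(4) by auto
    then have "((v, length \<omega>), (v, Suc (length \<omega>))) \<in> link_gluing n (Suc (length \<omega>)) l"
      by (simp add: link_gluing_def)
    then show ?thesis using Pair False link_connected by simp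
  qed (simp add: Pair)
qed

lemma new_strand_connected_cross:
  assumes x: "fst x \<in> {1..n}" and cross: "snd l"
  shows "(segment_of (Suc (length \<omega>)) x, segment_of (Suc (length \<omega>)) (new_pairing x)) \<in> new_step\<^sup>*"
proof -
  let ?t = "Transposition.transpose (a, False) (b, False)"
  have t_in: "fst (?t y) \<in> {1..n}" if "fst y \<in> {1..n}" for y
    using that link by (auto simp: Transposition.transpose_def)
  have cross_over: "(segment_of (length \<omega>) (?t y), segment_of (Suc (length \<omega>)) y) \<in> new_step\<^sup>*"
    if "fst y \<in> {1..n}" for y
  proof -
    consider "y = (a, False)" | "y = (b, False)" | "y \<noteq> (a, False)" "y \<noteq> (b, False)" by blast
    then show ?thesis
    proof cases
      case 1
      have "((b, length \<omega>), (a, Suc (length \<omega>))) \<in> link_gluing n (Suc (length \<omega>)) l"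
        using cross link by (auto simp: link_gluing_def)
      then show ?thesis using 1 link_connected link(1) by simp
    next
      case 2
      have "((a, length \<omega>), (b, Suc (length \<omega>))) \<in> link_gluing n (Suc (length \<omega>)) l"
        using cross link by (auto simp: link_gluing_def)
      then show ?thesis using 2 link_connected link(1) by simp
    next
      case 3
      then show ?thesis using through_connected[OF that] by simp
    qed
  qed
  have "(segment_of (Suc (length \<omega>)) x, segment_of (length \<omega>) (?t x)) \<in> new_step\<^sup>*"
    using new_connected_sym[OF cross_over[OF x]] .
  moreover have "(segment_of (length \<omega>) (?t x), segment_of (length \<omega>) (mu (?t x))) \<in> new_step\<^sup>*"
    using old_strand_connected[OF t_in[OF x]] .
  moreover have "(segment_of (length \<omega>) (mu (?t x)), segment_of (Suc (length \<omega>)) (?t (mu (?t x)))) \<in> new_step\<^sup>*"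
    using cross_over[OF t_in[OF pairing_fst_in[OF pairing t_in[OF x]]]] by simp
  ultimately show ?thesis using cross by (simp add: add_link_cross)
qed

lemma end_to_old_partner:
  assumes "fst y \<in> {1..n}" "y \<noteq> (a, False)" "y \<noteq> (b, False)"
  shows "(segment_of (Suc (length \<omega>)) y, segment_of (length \<omega>) (mu y)) \<in> new_step\<^sup>*"
  using rtrancl_trans[OF new_connected_sym[OF through_connected[OF assms]] old_strand_connected[OF assms(1)]] .

lemma old_partner_to_end:
  assumes "fst y \<in> {1..n}" "mu y \<noteq> (a, False)" "mu y \<noteq> (b, False)"
  shows "(segment_of (length \<omega>) y, segment_of (Suc (length \<omega>)) (mu y)) \<in> new_step\<^sup>*"
  using rtrancl_trans[OF old_strand_connected[OF assms(1)]
      through_connected[OF pairing_fst_in[OF pairing assms(1)] assms(2,3)]] .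

lemma new_strand_connected_bar:
  assumes x: "fst x \<in> {1..n}" and bar: "\<not> snd l"
  shows "(segment_of (Suc (length \<omega>)) x, segment_of (Suc (length \<omega>)) (new_pairing x)) \<in> new_step\<^sup>*"
proof -
  let ?A = "(a, False)" and ?B = "(b, False)" and ?s = "length \<omega>"
  note G = pairingD[OF pairing]
  have fA: "fst ?A \<in> {1..n}" "fst ?B \<in> {1..n}" using link by auto
  have "((a, ?s), (b, ?s)) \<in> link_gluing n (Suc ?s) l" "((a, Suc ?s), (b, Suc ?s)) \<in> link_gluing n (Suc ?s) l"
    using bar link by (auto simp: link_gluing_def)
  then have AB: "(segment_of ?s ?A, segment_of ?s ?B) \<in> new_step\<^sup>*"
    "(segment_of (Suc ?s) ?A, segment_of (Suc ?s) ?B) \<in> new_step\<^sup>*"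
    using link_connected by auto
  consider "x = ?A" | "x = ?B" | "x \<noteq> ?A" "x \<noteq> ?B" "x = mu ?A"
    | "x \<noteq> ?A" "x \<noteq> ?B" "x \<noteq> mu ?A" "x = mu ?B"
    | "x \<noteq> ?A" "x \<noteq> ?B" "x \<noteq> mu ?A" "x \<noteq> mu ?B" by blast
  then show ?thesis
  proof cases
    case 1
    then show ?thesis using AB bar by (simp add: add_link_bar)
  next
    case 2
    then show ?thesis using new_connected_sym[OF AB(2)] bar link(1) by (simp add: add_link_bar)
  next
    case 3
    then have "mu x = ?A" "mu ?B \<noteq> ?A" "mu ?B \<noteq> ?B" using G by metis+
    then have "(segment_of (Suc ?s) x, segment_of ?s ?A) \<in> new_step\<^sup>*" using end_to_old_partner[OF x 3(1,2)] by simp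
    then show ?thesis
      using 3 bar rtrancl_trans[OF rtrancl_trans[OF _ AB(1)] old_partner_to_end[OF fA(2)]] \<open>mu ?B \<noteq> ?A\<close> \<open>mu ?B \<noteq> ?B\<close>
      by (simp add: add_link_bar)
  next
    case 4
    then have "mu x = ?B" "mu ?A \<noteq> ?A" "mu ?A \<noteq> ?B" using G by metis+
    then have "(segment_of (Suc ?s) x, segment_of ?s ?B) \<in> new_step\<^sup>*" using end_to_old_partner[OF x 4(1,2)] by simp
    then show ?thesis
      using 4 bar rtrancl_trans[OF rtrancl_trans[OF _ new_connected_sym[OF AB(1)]] old_partner_to_end[OF fA(1)]]
        \<open>mu ?A \<noteq> ?A\<close> \<open>mu ?A \<noteq> ?B\<close>
      by (simp add: add_link_bar)
  next
    case 5
    then have "mu x \<noteq> ?A" "mu x \<noteq> ?B" using G(1) by metis+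
    then show ?thesis
      using 5 bar rtrancl_trans[OF new_connected_sym[OF through_connected[OF x 5(1,2)]] old_partner_to_end[OF x]]
      by (simp add: add_link_bar)
  qed
qed

lemma new_strand_connected:
  "fst x \<in> {1..n} \<Longrightarrow> (segment_of (Suc (length \<omega>)) x, segment_of (Suc (length \<omega>)) (new_pairing x)) \<in> new_step\<^sup>*"
  using new_strand_connected_cross new_strand_connected_bar by blast

end

lemma strands_matched_snoc:
  assumes g: "pairing n mu" and matched: "strands_matched n \<omega> mu"
    and link: "a \<noteq> b" "a \<in> {1..n}" "b \<in> {1..n}" "fst l = {a, b}"
  shows "strands_matched n (\<omega> @ [l]) (add_link a b (snd l) mu)"
proof -
  interpret link_extension n \<omega> mu l a b using assms by unfold_locales
  have "(segment_of (Suc (length \<omega>)) x, segment_of (Suc (length \<omega>)) y) \<in> new_step\<^sup>* \<longleftrightarrow> y = x \<or> y = new_pairing x"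
    if "fst x \<in> {1..n}" "fst y \<in> {1..n}" for x y
  proof
    assume "(segment_of (Suc (length \<omega>)) x, segment_of (Suc (length \<omega>)) y) \<in> new_step\<^sup>*"
    then have "{x, new_pairing x} = {y, new_pairing y}" using label_connected label_end that by metis
    then show "y = x \<or> y = new_pairing x" by (auto simp: doubleton_eq_iff)
  qed (use new_strand_connected[OF that(1)] in auto)
  then show ?thesis by (simp add: strands_matched_def)
qed

definition cut_step :: "nat \<Rightarrow> link list \<Rightarrow> ((nat \<times> nat) \<times> (nat \<times> nat)) set" where
  "cut_step n \<omega> = wrap_gluing n \<omega> \<union> (wrap_gluing n \<omega>)\<inverse> \<union> strand_step n \<omega>"

lemma same_loop_iff_cut_step:
  "same_loop n \<omega> v w \<longleftrightarrow> ((v, 0), (w, 0)) \<in> (cut_step n \<omega>)\<^sup>*"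
proof -
  have "seg_adj n \<omega> \<union> (seg_adj n \<omega>)\<inverse> = cut_step n \<omega>"
    by (auto simp: seg_adj_eq cut_step_def strand_step_def)
  then show ?thesis by (simp add: same_loop_def)
qed

definition loop_class :: "(strand_end \<Rightarrow> strand_end) \<Rightarrow> strand_end \<Rightarrow> strand_end set" where
  "loop_class mu x = {y. (x, y) \<in> (loop_step mu)\<^sup>*}"

lemma loop_class_eq: "pairing n mu \<Longrightarrow> (x, y) \<in> (loop_step mu)\<^sup>* \<Longrightarrow> loop_class mu x = loop_class mu y"
  unfolding loop_class_def using loop_connected_sym by (blast intro: rtrancl_trans)

text \<open>Labelling every segment by the loop class of the ends of its strand gives a labelling that
  is constant along the gluing.\<close>

lemma same_loop_imp_loop_connected:
  assumes g: "pairing n mu" and matched: "strands_matched n \<omega> mu" and v: "v \<in> {1..n}" and w: "w \<in> {1..n}"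
    and same: "same_loop n \<omega> v w"
  shows "((v, True), (w, True)) \<in> (loop_step mu)\<^sup>*"
proof -
  let ?s = "length \<omega>"
  define lab where "lab z = \<Union> (loop_class mu ` strand_ends n \<omega> z)" for z
  have lab_end: "lab (segment_of ?s y) = loop_class mu y" if "fst y \<in> {1..n}" for y
    using strand_ends_segment[OF g matched that] loop_class_eq[OF g loop_connected_pair[of y mu]]
    by (simp add: lab_def)
  have lab_wrap: "lab (u, ?s) = lab (u, 0)" if "u \<in> {1..n}" for u
    using lab_end[of "(u, False)"] lab_end[of "(u, True)"] that
      loop_class_eq[OF g loop_connected_wrap(1)[of "(u, True)" mu]] by (simp add: wrap_def)
  have lab_step: "lab y = lab z" if e: "(y, z) \<in> cut_step n \<omega>" for y z
  proof -
    consider "(y, z) \<in> strand_step n \<omega>" | u where "u \<in> {1..n}" "(y, z) = ((u, ?s), (u, 0)) \<or> (y, z) = ((u, 0), (u, ?s))"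
      using e unfolding cut_step_def wrap_gluing_def by blast
    then show ?thesis
    proof cases
      case 1
      then show ?thesis using strand_ends_eq[OF r_into_rtrancl[OF 1]] by (simp add: lab_def)
    qed (use lab_wrap in auto)
  qed
  have "((v, 0), (w, 0)) \<in> (cut_step n \<omega>)\<^sup>*" using same by (simp add: same_loop_iff_cut_step)
  then have "lab (v, 0) = lab (w, 0)" by (induction rule: rtrancl_induct) (auto dest: lab_step)
  then have "loop_class mu (v, True) = loop_class mu (w, True)"
    using lab_end[of "(v, True)"] lab_end[of "(w, True)"] v w by simp
  then show ?thesis by (simp add: loop_class_def set_eq_iff)
qed

lemma loop_connected_imp_same_loop:
  assumes g: "pairing n mu" and matched: "strands_matched n \<omega> mu" and v: "v \<in> {1..n}"
    and conn: "((v, True), (w, True)) \<in> (loop_step mu)\<^sup>*"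
  shows "same_loop n \<omega> v w"
proof -
  let ?s = "length \<omega>"
  have strand: "(segment_of ?s y, segment_of ?s (mu y)) \<in> (cut_step n \<omega>)\<^sup>*" if "fst y \<in> {1..n}" for y
    using matched that pairing_fst_in[OF g that] rtrancl_mono[of "strand_step n \<omega>" "cut_step n \<omega>"]
    unfolding strands_matched_def cut_step_def by blast
  have wrap: "(segment_of ?s y, segment_of ?s (wrap y)) \<in> (cut_step n \<omega>)\<^sup>*" if "fst y \<in> {1..n}" for y
  proof (cases y)
    case (Pair u c)
    then have "((u, ?s), (u, 0)) \<in> cut_step n \<omega>" "((u, 0), (u, ?s)) \<in> cut_step n \<omega>"
      using that by (auto simp: cut_step_def wrap_gluing_def)
    then show ?thesis using Pair by (cases c) (auto simp: wrap_def)
  qed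
  have "fst y \<in> {1..n} \<and> ((v, 0), segment_of ?s y) \<in> (cut_step n \<omega>)\<^sup>*"
    if "((v, True), y) \<in> (loop_step mu)\<^sup>*" for y
    using that
  proof (induction rule: rtrancl_induct)
    case (step y z)
    then have y: "fst y \<in> {1..n}" "((v, 0), segment_of ?s y) \<in> (cut_step n \<omega>)\<^sup>*" by auto
    consider "z = mu y" | "z = wrap y" using step.hyps(2) by (auto simp: loop_step_iff)
    then show ?case
      by cases (use y strand[OF y(1)] wrap[OF y(1)] pairing_fst_in[OF g y(1)] in \<open>auto intro: rtrancl_trans\<close>)
  qed (use v in simp)
  then have "((v, 0), segment_of ?s (w, True)) \<in> (cut_step n \<omega>)\<^sup>*" using conn by blast
  then show ?thesis by (simp add: same_loop_iff_cut_step)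
qed

definition loop_pairing :: "link list \<Rightarrow> strand_end \<Rightarrow> strand_end" where
  "loop_pairing \<omega> = foldl (\<lambda>mu l. add_link (Min (fst l)) (Max (fst l)) (snd l) mu) wrap \<omega>"

lemma loop_pairing_Nil: "loop_pairing [] = wrap"
  by (simp add: loop_pairing_def)

lemma loop_pairing_snoc:
  "loop_pairing (\<omega> @ [l]) = add_link (Min (fst l)) (Max (fst l)) (snd l) (loop_pairing \<omega>)"
  by (simp add: loop_pairing_def)

lemma edges_Min_Max:
  assumes "e \<in> edges n"
  shows "Min e \<noteq> Max e" "Min e \<in> {1..n}" "Max e \<in> {1..n}" "e = {Min e, Max e}"
proof -
  obtain i j where ij: "e = {i, j}" "i \<in> {1..n}" "j \<in> {1..n}" "i \<noteq> j"
    using assms by (auto simp: edges_def)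
  then have "Min e = min i j" "Max e = max i j" by auto
  then show "Min e \<noteq> Max e" "Min e \<in> {1..n}" "Max e \<in> {1..n}" "e = {Min e, Max e}"
    using ij by (auto simp: min_def max_def)
qed

lemma graph_rel_snoc:
  assumes "fst l \<in> edges n"
  shows "graph_rel (\<omega> @ [l]) = graph_rel \<omega> \<union> {(Min (fst l), Max (fst l)), (Max (fst l), Min (fst l))}"
proof -
  let ?a = "Min (fst l)" and ?b = "Max (fst l)"
  have "(i \<noteq> j \<and> {i, j} = fst l) \<longleftrightarrow> (i, j) \<in> {(?a, ?b), (?b, ?a)}" for i j
    using edges_Min_Max[OF assms] by (auto simp: doubleton_eq_iff)
  then show ?thesis unfolding graph_rel_def by auto
qed

lemma sym_graph_rel: "sym (graph_rel \<omega>)"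
  by (auto simp: graph_rel_def sym_def insert_commute)

lemma loop_pairing_invariants:
  assumes "fst ` set \<omega> \<subseteq> edges n"
  shows "pairing n (loop_pairing \<omega>) \<and> strands_matched n \<omega> (loop_pairing \<omega>)
    \<and> pairs_within n (loop_pairing \<omega>) (graph_rel \<omega>)"
  using assms
proof (induction \<omega> rule: rev_induct)
  case Nil
  then show ?case
    by (simp add: loop_pairing_Nil pairing_wrap strands_matched_Nil pairs_within_def)
next
  case (snoc l \<omega>)
  then have IH: "pairing n (loop_pairing \<omega>)" "strands_matched n \<omega> (loop_pairing \<omega>)"
    "pairs_within n (loop_pairing \<omega>) (graph_rel \<omega>)" and e: "fst l \<in> edges n"
    by auto
  note E = edges_Min_Max[OF e]
  show ?case
    unfolding loop_pairing_snoc graph_rel_snoc[OF e]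
    using pairing_add_link[OF IH(1) E(1-3)] strands_matched_snoc[OF IH(1,2) E]
      pairs_within_add_link[OF IH(1,3) E(2,3) sym_graph_rel] by blast
qed

lemma cycle_of_eq_loop_of:
  assumes "fst ` set \<omega> \<subseteq> edges n" "v \<in> {1..n}"
  shows "cycle_of n \<omega> v = loop_of (loop_pairing \<omega>) n v"
  using loop_pairing_invariants[OF assms(1)] assms(2)
    same_loop_imp_loop_connected[of n "loop_pairing \<omega>" \<omega> v] loop_connected_imp_same_loop[of n "loop_pairing \<omega>" \<omega> v]
  by (auto simp: cycle_of_def loop_of_def)

lemma card_V_G_diff_V_C_le:
  assumes edges: "fst ` set \<omega> \<subseteq> edges n"
  shows "card (V_G n \<omega> k - V_C n \<omega> k) \<le> k * card (deficient_loops (loop_pairing \<omega>) (graph_rel \<omega>) n k)"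
proof -
  let ?D = "deficient_loops (loop_pairing \<omega>) (graph_rel \<omega>) n k"
  have "V_G n \<omega> k - V_C n \<omega> k \<subseteq> \<Union> ?D"
  proof
    fix v assume v: "v \<in> V_G n \<omega> k - V_C n \<omega> k"
    then have vn: "v \<in> {1..n}" and big: "k \<le> card (component (graph_rel \<omega>) n v)"
      and small: "card (loop_of (loop_pairing \<omega>) n v) < k"
      using cycle_of_eq_loop_of[OF edges] by (auto simp: V_G_def V_C_def component_def)
    then have "loop_of (loop_pairing \<omega>) n v \<in> ?D" by (auto simp: deficient_loops_def)
    then show "v \<in> \<Union> ?D" using loop_of_self[OF vn] by blast
  qed
  then have "card (V_G n \<omega> k - V_C n \<omega> k) \<le> card (\<Union> ?D)"
    by (intro card_mono finite_Union finite_deficient_loops) (auto simp: deficient_loops_def finite_loop_of)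
  also have "\<dots> \<le> sum card ?D" by (rule card_Union_le_sum_card)
  also have "\<dots> \<le> sum (\<lambda>_. k) ?D" by (rule sum_mono) (auto simp: deficient_loops_def)
  finally show ?thesis by (simp add: mult.commute)
qed

lemma deficient_loops_Nil: "deficient_loops (loop_pairing []) (graph_rel []) n k = {}"
proof -
  have "loop_of wrap n v = component (graph_rel []) n v" if v: "v \<in> {1..n}" for v
  proof -
    have comp: "component (graph_rel []) n v = {v}" using v by (auto simp: component_def graph_rel_def)
    have "pairs_within n wrap (graph_rel [])" by (simp add: pairs_within_def)
    then have "loop_of wrap n v \<subseteq> {v}" using loop_of_subset_component[OF pairing_wrap _ v] comp by blast
    then show ?thesis using loop_of_self[OF v, of wrap] comp by auto
  qed
  then show ?thesis by (auto simp: deficient_loops_def loop_pairing_Nil)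
qed

definition near_link :: "(strand_end \<Rightarrow> strand_end) \<Rightarrow> nat \<Rightarrow> nat set \<Rightarrow> bool" where
  "near_link mu k e \<longleftrightarrow> loop_near mu k (Min e) (Max e) \<and> loop_near mu k (Max e) (Min e)"

lemma card_deficient_loops_snoc:
  assumes edges: "fst ` set \<omega> \<subseteq> edges n" and e: "fst l \<in> edges n"
  shows "card (deficient_loops (loop_pairing (\<omega> @ [l])) (graph_rel (\<omega> @ [l])) n k)
           \<le> card (deficient_loops (loop_pairing \<omega>) (graph_rel \<omega>) n k)
             + (if near_link (loop_pairing \<omega>) k (fst l) then 2 else 0)"
proof -
  have "pairing n (loop_pairing \<omega>)" "pairs_within n (loop_pairing \<omega>) (graph_rel \<omega>)"
    using loop_pairing_invariants[OF edges] by auto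
  then show ?thesis unfolding loop_pairing_snoc graph_rel_snoc[OF e] near_link_def
    using card_deficient_loops_add_link[OF _ _ sym_graph_rel edges_Min_Max(1-3)[OF e]] by blast
qed

lemma loop_near_subset:
  "{b. loop_near mu k a b}
     \<subseteq> loop_arc mu (a, False) 0 k \<union> loop_arc mu (a, False) (loop_period mu (a, False) - k) (loop_period mu (a, False))"
  unfolding loop_near_def loop_arc_def by auto

lemma card_loop_near: "card {b. loop_near mu k a b} \<le> 2 * k"
proof -
  let ?L = "loop_period mu (a, False)"
  have "card {b. loop_near mu k a b} \<le> card (loop_arc mu (a, False) 0 k \<union> loop_arc mu (a, False) (?L - k) ?L)"
    by (rule card_mono[OF _ loop_near_subset]) (simp add: loop_arc_def)
  also have "\<dots> \<le> card (loop_arc mu (a, False) 0 k) + card (loop_arc mu (a, False) (?L - k) ?L)"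
    by (rule card_Un_le)
  also have "\<dots> \<le> card {0..<k} + card {?L - k..<?L}"
    unfolding loop_arc_def by (intro add_mono card_image_le) simp_all
  finally show ?thesis by simp
qed

lemma finite_loop_near: "finite {b. loop_near mu k a b}"
  by (rule finite_subset[OF loop_near_subset]) (simp add: loop_arc_def)

lemma card_edges: "2 * card (edges n) = n * (n - 1)"
proof -
  have "edges n = {B. B \<subseteq> {1..n} \<and> card B = 2}"
    unfolding edges_def card_2_iff by blast
  then have "card (edges n) = n choose 2" using n_subsets[of "{1..n}" 2] by simp
  moreover have "even (n * (n - 1))" by (cases n) auto
  ultimately show ?thesis by (simp add: choose_two)
qed

text \<open>Every near link yields two ordered pairs \<open>(a, b)\<close> with \<open>b\<close> near \<open>a\<close>, and every \<open>a\<close> has at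
  most \<open>2 k\<close> near points.\<close>

lemma card_near_links: "2 * card {e \<in> edges n. near_link mu k e} \<le> n * (2 * k)"
proof -
  let ?E = "{e \<in> edges n. near_link mu k e}"
  define pairs where "pairs e = {(Min e, Max e), (Max e, Min e)}" for e :: "nat set"
  define Q where "Q = Sigma {1..n} (\<lambda>a. {b. loop_near mu k a b})"
  have finE: "finite ?E" by (rule finite_subset[of _ "Pow {1..n}"]) (auto simp: edges_def)
  have "card (pairs e) = 2" if "e \<in> ?E" for e
    using edges_Min_Max(1)[of e n] that by (simp add: pairs_def)
  then have "2 * card ?E = (\<Sum>e\<in>?E. card (pairs e))" by simp
  also have "\<dots> = card (\<Union>e\<in>?E. pairs e)"
  proof (rule card_UN_disjoint[symmetric])
    show "\<forall>e\<in>?E. \<forall>e'\<in>?E. e \<noteq> e' \<longrightarrow> pairs e \<inter> pairs e' = {}"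
    proof (intro ballI impI)
      fix e e' assume e: "e \<in> ?E" "e' \<in> ?E" "e \<noteq> e'"
      then have "{Min e, Max e} \<noteq> {Min e', Max e'}"
        using edges_Min_Max(4)[of e n] edges_Min_Max(4)[of e' n] by auto
      then show "pairs e \<inter> pairs e' = {}" by (auto simp: pairs_def doubleton_eq_iff)
    qed
  qed (use finE in \<open>simp_all add: pairs_def\<close>)
  also have "\<dots> \<le> card Q"
  proof (rule card_mono)
    show "finite Q" unfolding Q_def by (intro finite_SigmaI) (simp_all add: finite_loop_near)
    show "(\<Union>e\<in>?E. pairs e) \<subseteq> Q"
      using edges_Min_Max(2,3) by (auto simp: pairs_def Q_def near_link_def)
  qed
  also have "card Q = (\<Sum>a\<in>{1..n}. card {b. loop_near mu k a b})" unfolding Q_def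
    by (rule card_SigmaI) (simp_all add: finite_loop_near)
  also have "\<dots> \<le> (\<Sum>a\<in>{1..n}. 2 * k)" by (rule sum_mono) (rule card_loop_near)
  finally show ?thesis by simp
qed

lemma replicate_pmf_Suc_snoc:
  "replicate_pmf (Suc s) p = bind_pmf (replicate_pmf s p) (\<lambda>xs. map_pmf (\<lambda>x. xs @ [x]) p)"
  using replicate_pmf_distrib[of s 1 p]
  by (simp add: replicate_pmf_1 map_pmf_def bind_assoc_pmf bind_return_pmf)

lemma finite_edges: "finite (edges n)"
  by (rule finite_subset[of _ "Pow {1..n}"]) (auto simp: edges_def)

lemma edges_not_empty: "2 < n \<Longrightarrow> edges n \<noteq> {}"
proof -
  assume "2 < n"
  then have "{1, 2} \<in> edges n" unfolding edges_def by force
  then show ?thesis by blast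
qed

lemma set_link_pmf: "2 < n \<Longrightarrow> set_pmf (link_pmf n \<nu>) \<subseteq> edges n \<times> UNIV"
  unfolding link_pmf_def by (auto simp: set_pmf_of_set[OF edges_not_empty finite_edges])

lemma finite_set_link_pmf: "2 < n \<Longrightarrow> finite (set_pmf (link_pmf n \<nu>))"
  by (rule finite_subset[OF set_link_pmf]) (simp_all add: finite_edges)

lemma finite_set_replicate_pmf: "finite (set_pmf p) \<Longrightarrow> finite (set_pmf (replicate_pmf s p))"
proof -
  have "set_pmf (replicate_pmf s p) = {xs. set xs \<subseteq> set_pmf p \<and> length xs = s}"
    by (auto simp: set_replicate_pmf)
  then show "finite (set_pmf p) \<Longrightarrow> ?thesis" by (simp add: finite_lists_length_eq)
qed

lemma links_in_edges:
  "2 < n \<Longrightarrow> \<omega> \<in> set_pmf (replicate_pmf s (link_pmf n \<nu>)) \<Longrightarrow> fst ` set \<omega> \<subseteq> edges n"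
  using set_link_pmf[of n \<nu>] unfolding set_replicate_pmf by auto

lemma prob_near_link:
  assumes n: "2 < n"
  shows "measure_pmf.prob (link_pmf n \<nu>) {x. near_link mu k (fst x)} \<le> 2 * real k / (real n - 1)"
proof -
  let ?E = "{e \<in> edges n. near_link mu k e}"
  have "measure_pmf.prob (link_pmf n \<nu>) {x. near_link mu k (fst x)}
        = measure_pmf.prob (map_pmf fst (link_pmf n \<nu>)) {e. near_link mu k e}"
    by (simp add: vimage_def)
  also have "map_pmf fst (link_pmf n \<nu>) = pmf_of_set (edges n)"
    by (simp add: link_pmf_def map_fst_pair_pmf)
  also have "measure_pmf.prob (pmf_of_set (edges n)) {e. near_link mu k e} = card ?E / card (edges n)"
    using measure_pmf_of_set[OF edges_not_empty[OF n] finite_edges] by (simp add: Int_def)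
  also have "\<dots> \<le> 2 * real k / (real n - 1)"
  proof -
    have E: "2 * real (card ?E) \<le> real n * (2 * real k)"
    proof -
      have "real (2 * card ?E) \<le> real (n * (2 * k))"
        using card_near_links[of n mu k] by (simp only: of_nat_le_iff)
      then show ?thesis by simp
    qed
    have "real (2 * card (edges n)) = real (n * (n - 1))" using card_edges[of n] by (simp only:)
    then have all: "2 * real (card (edges n)) = real n * (real n - 1)" using n by (simp add: of_nat_diff)
    have pos: "0 < real n - 1" using n by simp
    have "real (card ?E) * (real n - 1) \<le> 2 * real k * real (card (edges n))"
    proof -
      have "2 * real (card ?E) * (real n - 1) \<le> real n * (2 * real k) * (real n - 1)"
        using E pos by (intro mult_right_mono) auto
      also have "\<dots> = 2 * real k * (2 * real (card (edges n)))" using all by simp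
      finally show ?thesis by (simp add: mult.commute mult.left_commute)
    qed
    moreover have "0 < card (edges n)" using edges_not_empty[OF n] finite_edges card_gt_0_iff by blast
    ultimately show ?thesis using pos by (simp add: field_simps)
  qed
  finally show ?thesis .
qed

definition deficiency :: "nat \<Rightarrow> nat \<Rightarrow> link list \<Rightarrow> real" where
  "deficiency n k \<omega> = real (card (deficient_loops (loop_pairing \<omega>) (graph_rel \<omega>) n k))"

lemma expectation_deficiency_snoc:
  assumes n: "2 < n" and edges: "fst ` set \<omega> \<subseteq> edges n"
  shows "measure_pmf.expectation (link_pmf n \<nu>) (\<lambda>x. deficiency n k (\<omega> @ [x]))
           \<le> deficiency n k \<omega> + 4 * real k / (real n - 1)"
proof -
  let ?L = "link_pmf n \<nu>" and ?B = "{x. near_link (loop_pairing \<omega>) k (fst x)}"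
  have fin: "finite (set_pmf ?L)" using finite_set_link_pmf[OF n] .
  have "measure_pmf.expectation ?L (\<lambda>x. deficiency n k (\<omega> @ [x]))
      \<le> measure_pmf.expectation ?L (\<lambda>x. deficiency n k \<omega> + 2 * indicator ?B x)"
  proof (rule integral_mono_AE)
    show "AE x in measure_pmf ?L. deficiency n k (\<omega> @ [x]) \<le> deficiency n k \<omega> + 2 * indicator ?B x"
      unfolding AE_measure_pmf_iff
    proof
      fix x assume "x \<in> set_pmf ?L"
      then have "x \<in> edges n \<times> UNIV" using set_link_pmf[OF n] by blast
      then have "fst x \<in> edges n" by (auto simp: mem_Times_iff)
      then show "deficiency n k (\<omega> @ [x]) \<le> deficiency n k \<omega> + 2 * indicator ?B x"
        using card_deficient_loops_snoc[OF edges, of x k] unfolding deficiency_def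
        by (cases "near_link (loop_pairing \<omega>) k (fst x)") (simp_all add: indicator_def)
    qed
  qed (simp_all add: integrable_measure_pmf_finite[OF fin])
  also have "\<dots> = deficiency n k \<omega> + 2 * measure_pmf.prob ?L ?B"
    by (simp add: integrable_measure_pmf_finite[OF fin])
  also have "\<dots> \<le> deficiency n k \<omega> + 4 * real k / (real n - 1)"
    using prob_near_link[OF n, of \<nu> "loop_pairing \<omega>" k] by simp
  finally show ?thesis .
qed

lemma expectation_deficiency_Suc:
  assumes n: "2 < n"
  shows "measure_pmf.expectation (replicate_pmf (Suc s) (link_pmf n \<nu>)) (deficiency n k)
      \<le> measure_pmf.expectation (replicate_pmf s (link_pmf n \<nu>)) (deficiency n k) + 4 * real k / (real n - 1)"
proof -
  let ?L = "link_pmf n \<nu>" and ?R = "replicate_pmf s (link_pmf n \<nu>)" and ?c = "4 * real k / (real n - 1)"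
  define A where "A = set_pmf ?R"
  have finL: "finite (set_pmf ?L)" using finite_set_link_pmf[OF n] .
  have finA: "finite A" unfolding A_def using finite_set_replicate_pmf[OF finL] .
  have "measure_pmf.expectation (replicate_pmf (Suc s) ?L) (deficiency n k)
      = (\<Sum>a\<in>A. pmf ?R a * measure_pmf.expectation ?L (\<lambda>x. deficiency n k (a @ [x])))"
    unfolding replicate_pmf_Suc_snoc
    by (subst pmf_expectation_bind[of A]) (use finA finL in \<open>auto simp: A_def\<close>)
  also have "\<dots> \<le> (\<Sum>a\<in>A. pmf ?R a * (deficiency n k a + ?c))"
    using expectation_deficiency_snoc[OF n links_in_edges[OF n]]
    by (intro sum_mono mult_left_mono) (auto simp: A_def)
  also have "\<dots> = (\<Sum>a\<in>A. pmf ?R a * deficiency n k a) + (\<Sum>a\<in>A. pmf ?R a) * ?c"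
    by (simp only: distrib_left sum.distrib sum_distrib_right)
  also have "(\<Sum>a\<in>A. pmf ?R a) = 1" using sum_pmf_eq_1[OF finA] by (simp add: A_def)
  also have "(\<Sum>a\<in>A. pmf ?R a * deficiency n k a) = measure_pmf.expectation ?R (deficiency n k)"
    by (subst integral_measure_pmf[OF finA]) (auto simp: A_def)
  finally show ?thesis by simp
qed

lemma expectation_deficiency_le:
  assumes "2 < n"
  shows "measure_pmf.expectation (replicate_pmf s (link_pmf n \<nu>)) (deficiency n k) \<le> real s * (4 * real k / (real n - 1))"
proof (induction s)
  case 0
  show ?case by (simp add: deficiency_def deficient_loops_Nil)
next
  case (Suc s)
  have "real (Suc s) * (4 * real k / (real n - 1)) = real s * (4 * real k / (real n - 1)) + 4 * real k / (real n - 1)"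
    by (simp add: ring_distribs add_divide_distrib)
  then show ?case using expectation_deficiency_Suc[OF assms, of s \<nu> k] Suc by linarith
qed

theorem lemma2p2:
  fixes n s k :: nat and \<nu> :: real
  assumes "n > 2" and "0 \<le> \<nu>" and "\<nu> < 1"
  shows "measure_pmf.expectation (links_pmf n \<nu> s) (\<lambda>\<omega>. real (card (V_G n \<omega> k - V_C n \<omega> k)))
           \<le> 4 * real s * real k ^ 2 / (real n - 1)"
proof -
  let ?R = "replicate_pmf s (link_pmf n \<nu>)"
  have fin: "finite (set_pmf ?R)"
    using finite_set_replicate_pmf[OF finite_set_link_pmf[OF assms(1)]] .
  have "measure_pmf.expectation (links_pmf n \<nu> s) (\<lambda>\<omega>. real (card (V_G n \<omega> k - V_C n \<omega> k)))
      \<le> measure_pmf.expectation ?R (\<lambda>\<omega>. real k * deficiency n k \<omega>)"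
    unfolding links_pmf_def
  proof (rule integral_mono_AE)
    show "AE \<omega> in measure_pmf ?R. real (card (V_G n \<omega> k - V_C n \<omega> k)) \<le> real k * deficiency n k \<omega>"
      using card_V_G_diff_V_C_le[OF links_in_edges[OF assms(1)]] unfolding AE_measure_pmf_iff deficiency_def
      by (metis of_nat_le_iff of_nat_mult)
  qed (simp_all add: integrable_measure_pmf_finite[OF fin])
  also have "\<dots> = real k * measure_pmf.expectation ?R (deficiency n k)"
    by simp
  also have "\<dots> \<le> real k * (real s * (4 * real k / (real n - 1)))"
    using expectation_deficiency_le[OF assms(1), of s \<nu> k] by (intro mult_left_mono) auto
  also have "\<dots> = 4 * real s * real k ^ 2 / (real n - 1)"
    by (simp add: power2_eq_square)
  finally show ?thesis .
qed

end
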